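(* Let $\nu$ be a signature. The subspace $H_\nu\subset\mathfrak H_\nu$ is invariant under the operators $\mathfrak r_\nu(\mathcal A)$ for all $\mathcal A\in\widetilde{\mathrm{Hinge}}_n$.
   Context: Let $V=\mathbb C^n$ with basis $e_1,\dots,e_n$. A signature is a tuple of integers $\nu_1\ge\dots\ge\nu_n\ge0$; put $\nu_{n+1}=0$, $\mathfrak H_\nu=\bigotimes_{j=1}^n(\Lambda^jV)^{\otimes(\nu_j-\nu_{j+1})}$, $\Xi_\nu=\bigotimes_j(e_1\wedge\dots\wedge e_j)^{\otimes(\nu_j-\nu_{j+1})}$. For $\mathcal A=(A_0,\dots,A_n)$ with $A_j\in\mathrm{Mat}(\Lambda^jV)$, $\mathfrak r_\nu(\mathcal A)=\bigotimes_jA_j^{\otimes(\nu_j-\nu_{j+1})}$. With $\lambda^j_{\mathrm{cha}}(g)v_1\wedge\dots\wedge v_j=gv_1\wedge\dots\wedge gv_j$, $H_\nu$ is the linear span of the vectors $\mathfrak r_\nu(\lambda^0_{\mathrm{cha}}(g),\dots,\lambda^n_{\mathrm{cha}}(g))\Xi_\nu$, $g\in\mathrm{GL}_n(\mathbb C)$. A linear relation is a subspace $P\subset V\oplus V$; $\mathrm{Ker}\,P=\{v: v\oplus0\in P\}$, $\mathrm{Dom}\,P,\mathrm{Im}\,P$ the projections to the first and second summands, $\mathrm{Indef}\,P=\{w:0\oplus w\in P\}$, $\mathrm{rk}\,P=\dim\mathrm{Dom}\,P-\dim\mathrm{Ker}\,P$. If $\dim P=n$, choose bases $f_1,\dots,f_a,g_1,\dots,g_b,h_1,\dots,h_c$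 and $F_1,\dots,F_a,G_1,\dots,G_b,H_1,\dots,H_c$ of $V$ with $P$ spanned by $0\oplus F_i$, $g_j\oplus G_j$, $h_k\oplus0$; $\lambda(P)$ maps $f_1\wedge\dots\wedge f_a\wedge g_{i_1}\wedge\dots\wedge g_{i_s}$ to $F_1\wedge\dots\wedge F_a\wedge G_{i_1}\wedge\dots\wedge G_{i_s}$ and kills the other basis monomials (up to scalar); $\lambda^m(P)$ its restriction to $\Lambda^mV$. A hinge is a sequence $\mathcal P=(P_1,\dots,P_k)$ of $n$-dimensional relations with $\mathrm{Ker}\,P_j=\mathrm{Dom}\,P_{j+1}$, $\mathrm{Im}\,P_j=\mathrm{Indef}\,P_{j+1}$, $\mathrm{Dom}\,P_1=V$, $\mathrm{Im}\,P_k=V$, $\mathrm{rk}\,P_j>0$. For each $m$ there is a nonzero $\lambda^m(P_j)$, and any two nonzero ones are proportional; $\lambda^m(\mathcal P)$ denotes it (up to scalar). $\widetilde{\mathrm{Hinge}}_n$ is the set of tuples $(c_0\lambda^0(\mathcal P),\dots,c_n\lambda^n(\mathcal P))$ with $\mathcal P$ a hinge and $c_j\in\mathbb C$. *)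

theory Defs
  imports Complex_Main "Jordan_Normal_Form.Determinant"
begin

text \<open>V = C^n is modelled as functions nat => complex vanishing outside {..<n};
 e_{i+1} corresponds to the indicator of i (0-based indices).\<close>

type_synonym cvec = "nat \<Rightarrow> complex"

definition zv :: cvec where "zv = (\<lambda>_. 0)"

definition inV :: "nat \<Rightarrow> cvec \<Rightarrow> bool" where
  "inV n v \<longleftrightarrow> (\<forall>i\<ge>n. v i = 0)"

definition Vsp :: "nat \<Rightarrow> cvec set" where
  "Vsp n = {v. inV n v}"

definition lcomb :: "cvec list \<Rightarrow> (nat \<Rightarrow> complex) \<Rightarrow> cvec" where
  "lcomb vs c = (\<lambda>i. \<Sum>k<length vs. c k * (vs ! k) i)"

definition lspan :: "cvec list \<Rightarrow> cvec set" where
  "lspan vs = range (lcomb vs)"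

definition lindep_free :: "cvec list \<Rightarrow> bool" where
  "lindep_free vs \<longleftrightarrow> (\<forall>c. lcomb vs c = zv \<longrightarrow> (\<forall>k<length vs. c k = 0))"

definition is_basis :: "nat \<Rightarrow> cvec list \<Rightarrow> bool" where
  "is_basis n vs \<longleftrightarrow> length vs = n \<and> (\<forall>v\<in>set vs. inV n v) \<and> lindep_free vs
      \<and> lspan vs = Vsp n"

definition vdim :: "cvec set \<Rightarrow> nat" where
  "vdim W = (LEAST k. \<exists>vs. length vs = k \<and> W = lspan vs)"

text \<open>Linear relations: subspaces of V \<oplus> V, elements are pairs.\<close>
definition pcomb :: "(cvec \<times> cvec) list \<Rightarrow> (nat \<Rightarrow> complex) \<Rightarrow> cvec \<times> cvec" where
  "pcomb ps c = (lcomb (map fst ps) c, lcomb (map snd ps) c)"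

definition pspan :: "(cvec \<times> cvec) list \<Rightarrow> (cvec \<times> cvec) set" where
  "pspan ps = range (pcomb ps)"

definition rel_ndim :: "nat \<Rightarrow> (cvec \<times> cvec) set \<Rightarrow> bool" where
  "rel_ndim n P \<longleftrightarrow> (\<exists>ps. length ps = n \<and> (\<forall>p\<in>set ps. inV n (fst p) \<and> inV n (snd p))
      \<and> (\<forall>c. pcomb ps c = (zv, zv) \<longrightarrow> (\<forall>k<n. c k = 0)) \<and> P = pspan ps)"

definition Ker :: "(cvec \<times> cvec) set \<Rightarrow> cvec set" where
  "Ker P = {v. (v, zv) \<in> P}"
definition Indef :: "(cvec \<times> cvec) set \<Rightarrow> cvec set" where
  "Indef P = {w. (zv, w) \<in> P}"
definition Dom :: "(cvec \<times> cvec) set \<Rightarrow> cvec set" where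
  "Dom P = fst ` P"
definition Im :: "(cvec \<times> cvec) set \<Rightarrow> cvec set" where
  "Im P = snd ` P"
definition rk :: "(cvec \<times> cvec) set \<Rightarrow> nat" where
  "rk P = vdim (Dom P) - vdim (Ker P)"

definition hinge :: "nat \<Rightarrow> (cvec \<times> cvec) set list \<Rightarrow> bool" where
  "hinge n Ps \<longleftrightarrow> Ps \<noteq> [] \<and> (\<forall>P\<in>set Ps. rel_ndim n P \<and> rk P > 0)
     \<and> (\<forall>j. Suc j < length Ps \<longrightarrow> Ker (Ps ! j) = Dom (Ps ! Suc j) \<and> Im (Ps ! j) = Indef (Ps ! Suc j))
     \<and> Dom (hd Ps) = Vsp n \<and> Im (last Ps) = Vsp n"

text \<open>Exterior powers: Lambda^m V has basis e_S, S an m-subset of {..<n};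
 vectors/matrices are given by coordinates w.r.t. this basis.\<close>
definition ksub :: "nat \<Rightarrow> nat \<Rightarrow> nat set set" where
  "ksub n m = {S. S \<subseteq> {..<n} \<and> card S = m}"

text \<open>Coordinate of e_S in v_1 \<and> ... \<and> v_m.\<close>
definition wedge :: "cvec list \<Rightarrow> nat set \<Rightarrow> complex" where
  "wedge vs S = det (mat (length vs) (length vs)
       (\<lambda>(i, k). (vs ! k) (sorted_list_of_set S ! i)))"

definition subl :: "cvec list \<Rightarrow> nat set \<Rightarrow> cvec list" where
  "subl vs I = map (\<lambda>i. vs ! i) (sorted_list_of_set I)"

text \<open>M (a matrix on Lambda^m V) is a representative of lambda^m(P) (defined up to scalar),
 for some choice of adapted bases f,g,h and F,G,H.  The basis monomials of Lambda^m V built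
 from the basis f@g@h are indexed by m-subsets I of {..<n}; the monomial
 f_1..f_a g_{i_1}..g_{i_s} corresponds to {..<a} \<subseteq> I \<subseteq> {..<a+b}.\<close>
definition lamP :: "nat \<Rightarrow> (cvec \<times> cvec) set \<Rightarrow> nat \<Rightarrow> (nat set \<Rightarrow> nat set \<Rightarrow> complex) \<Rightarrow> bool" where
  "lamP n P m M \<longleftrightarrow> (\<exists>fs gs hs Fs Gs Hs.
      length fs = length Fs \<and> length gs = length Gs \<and> length hs = length Hs
    \<and> is_basis n (fs @ gs @ hs) \<and> is_basis n (Fs @ Gs @ Hs)
    \<and> P = pspan (map (\<lambda>F. (zv, F)) Fs @ zip gs Gs @ map (\<lambda>h. (h, zv)) hs)
    \<and> (\<forall>I\<in>ksub n m. \<forall>T\<in>ksub n m.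
         (\<Sum>S\<in>ksub n m. M T S * wedge (subl (fs @ gs @ hs) I) S)
         = (if {..<length fs} \<subseteq> I \<and> I \<subseteq> {..<length fs + length gs}
            then wedge (subl (Fs @ Gs @ Hs) I) T else 0)))"

text \<open>The set Hinge~_n: tuples A = (A_0, ..., A_n), A m a matrix on Lambda^m V.\<close>
definition hinge_tuple :: "nat \<Rightarrow> (nat \<Rightarrow> nat set \<Rightarrow> nat set \<Rightarrow> complex) \<Rightarrow> bool" where
  "hinge_tuple n A \<longleftrightarrow> (\<exists>Ps. hinge n Ps \<and>
     (\<forall>m\<le>n. \<exists>j<length Ps. \<exists>M. lamP n (Ps ! j) m M
        \<and> (\<exists>T\<in>ksub n m. \<exists>S\<in>ksub n m. M T S \<noteq> 0)
        \<and> (\<exists>c. \<forall>T\<in>ksub n m. \<forall>S\<in>ksub n m. A m T S = c * M T S)))"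

text \<open>Tensor space: the list of degrees of the factors Lambda^j V in H_nu (nu indexed 1..n).\<close>
definition degs :: "nat \<Rightarrow> (nat \<Rightarrow> nat) \<Rightarrow> nat list" where
  "degs n nu = concat (map (\<lambda>j. replicate (nu j - (if j = n then 0 else nu (Suc j))) j) [1..<Suc n])"

definition tb :: "nat \<Rightarrow> nat list \<Rightarrow> nat set list set" where
  "tb n ds = {Ss. length Ss = length ds \<and> (\<forall>k<length ds. Ss ! k \<in> ksub n (ds ! k))}"

definition rnu :: "nat \<Rightarrow> nat list \<Rightarrow> (nat \<Rightarrow> nat set \<Rightarrow> nat set \<Rightarrow> complex)
    \<Rightarrow> (nat set list \<Rightarrow> complex) \<Rightarrow> (nat set list \<Rightarrow> complex)" where
  "rnu n ds A x = (\<lambda>Ts. if Ts \<in> tb n ds then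
      (\<Sum>Ss\<in>tb n ds. (\<Prod>k<length ds. A (ds ! k) (Ts ! k) (Ss ! k)) * x Ss) else 0)"

definition Xi :: "nat list \<Rightarrow> (nat set list \<Rightarrow> complex)" where
  "Xi ds = (\<lambda>Ss. if Ss = map (\<lambda>d. {..<d}) ds then 1 else 0)"

definition lam_cha :: "(nat \<Rightarrow> nat \<Rightarrow> complex) \<Rightarrow> nat \<Rightarrow> nat set \<Rightarrow> nat set \<Rightarrow> complex" where
  "lam_cha g m T S = det (mat m m (\<lambda>(i, k). g (sorted_list_of_set T ! i) (sorted_list_of_set S ! k)))"

definition GLn :: "nat \<Rightarrow> (nat \<Rightarrow> nat \<Rightarrow> complex) set" where
  "GLn n = {g. det (mat n n (\<lambda>(i, k). g i k)) \<noteq> 0}"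

definition cspan :: "('a \<Rightarrow> complex) set \<Rightarrow> ('a \<Rightarrow> complex) set" where
  "cspan X = {x. \<exists>F c. finite F \<and> F \<subseteq> X \<and> x = (\<lambda>i. \<Sum>v\<in>F. c v * v i)}"

definition Hnu :: "nat \<Rightarrow> (nat \<Rightarrow> nat) \<Rightarrow> (nat set list \<Rightarrow> complex) set" where
  "Hnu n nu = cspan {rnu n (degs n nu) (lam_cha g) (Xi (degs n nu)) | g. g \<in> GLn n}"

end

theory Submission
  imports Defs "Jordan_Normal_Form.Gauss_Jordan_Elimination"
begin

text \<open>
  \<open>H\<^sub>\<nu>\<close> is spanned by the tensors \<open>r\<^sub>\<nu>(\<lambda>\<^sub>c\<^sub>h\<^sub>a(g)) \<Xi>\<^sub>\<nu>\<close>, whose factor in \<open>\<Lambda>\<^sup>dV\<close> is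
  \<open>u\<^sub>1 \<and> \<dots> \<and> u\<^sub>d\<close> for the columns \<open>u\<close> of \<open>g\<close>, so it suffices to apply \<open>r\<^sub>\<nu>(\<A>)\<close> to one of
  them factorwise.  If \<open>A\<^sub>d\<close> is proportional to \<open>\<lambda>\<^sup>d(P)\<close>, then \<open>A\<^sub>d (u\<^sub>1 \<and> \<dots> \<and> u\<^sub>d)\<close> is either
  zero or a decomposable vector \<open>w\<^sub>1 \<and> \<dots> \<and> w\<^sub>d\<close> with \<open>span w = P(span(u\<^sub>1,\<dots>,u\<^sub>d))\<close>, the image of
  the subspace under the relation \<open>P\<close>; this is seen by expanding \<open>u\<close> in a basis adapted to
  \<open>P\<close> and bringing the coefficient matrix into reduced echelon form.  For a hinge these
  images are nested as \<open>d\<close> grows: for one \<open>P\<^sub>j\<close> by monotonicity, and for \<open>i < j\<close> because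
  \<open>Im P\<^sub>i \<subseteq> Indef P\<^sub>j \<subseteq> P\<^sub>j(U)\<close>.  So they form a partial flag, and one basis \<open>w\<close> of \<open>V\<close>
  has them as initial spans.  Then every factor is a multiple of \<open>w\<^sub>1 \<and> \<dots> \<and> w\<^sub>d\<close>, and the
  image tensor is a multiple of the generator belonging to the matrix with columns \<open>w\<close>.
\<close>

section \<open>Minors of families of vectors\<close>

text \<open>With \<open>r = (!) (sorted_list_of_set S)\<close> this is the \<open>e\<^sub>S\<close>-coordinate of
  \<open>u 0 \<and> \<dots> \<and> u (m - 1)\<close>.\<close>
definition minor :: "nat \<Rightarrow> (nat \<Rightarrow> cvec) \<Rightarrow> (nat \<Rightarrow> nat) \<Rightarrow> complex" where
  "minor m u r = det (mat m m (\<lambda>(i, k). u k (r i)))"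

abbreviation sl :: "nat set \<Rightarrow> nat list" where
  "sl S \<equiv> sorted_list_of_set S"

lemma minor_cong: "(\<And>k. k < m \<Longrightarrow> u k = v k) \<Longrightarrow> minor m u r = minor m v r"
  unfolding minor_def by (intro arg_cong[where f = det] eq_matI) auto

lemma minor_cong_rows:
  "(\<And>i k. i < m \<Longrightarrow> k < m \<Longrightarrow> u k (r i) = v k (r i)) \<Longrightarrow> minor m u r = minor m v r"
  unfolding minor_def by (intro arg_cong[where f = det] eq_matI) auto

lemma minor_as_rows: "minor m u r = det (mat\<^sub>r m m (\<lambda>k. vec m (\<lambda>i. u k (r i))))"
proof -
  have "minor m u r = det (transpose_mat (mat m m (\<lambda>(i, k). u k (r i))))"
    unfolding minor_def by (rule det_transpose[symmetric]) auto
  also have "transpose_mat (mat m m (\<lambda>(i, k). u k (r i))) = mat\<^sub>r m m (\<lambda>k. vec m (\<lambda>i. u k (r i)))"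
    by (rule eq_matI) (auto simp: mat_of_rows_def)
  finally show ?thesis .
qed

definition maps_into :: "nat \<Rightarrow> nat \<Rightarrow> (nat \<Rightarrow> nat) set" where
  "maps_into m N = {f. (\<forall>i\<in>{0..<m}. f i \<in> {0..<N}) \<and> (\<forall>i. i \<notin> {0..<m} \<longrightarrow> f i = i)}"

lemma minor_multilinear:
  "minor m (\<lambda>k x. \<Sum>l<N. \<alpha> l k * b l x) r
     = (\<Sum>f\<in>maps_into m N. (\<Prod>k<m. \<alpha> (f k) k) * minor m (\<lambda>k. b (f k)) r)"
proof -
  let ?a = "\<lambda>k l. \<alpha> l k \<cdot>\<^sub>v vec m (\<lambda>i. b l (r i))"
  have rows: "vec m (\<lambda>i. \<Sum>l<N. \<alpha> l k * b l (r i)) = finsum_vec TYPE(complex) m (?a k) {0..<N}"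
    for k
  proof -
    have c: "finsum_vec TYPE(complex) m (?a k) {0..<N} \<in> carrier_vec m"
      by (rule finsum_vec_closed) auto
    show ?thesis
      by (rule eq_vecI, insert c, subst index_finsum_vec, auto simp: lessThan_atLeast0)
  qed
  have "minor m (\<lambda>k x. \<Sum>l<N. \<alpha> l k * b l x) r
      = det (mat\<^sub>r m m (\<lambda>k. finsum_vec TYPE(complex) m (?a k) {0..<N}))"
    unfolding minor_as_rows rows ..
  also have "\<dots> = (\<Sum>f\<in>maps_into m N. det (mat\<^sub>r m m (\<lambda>k. ?a k (f k))))"
    unfolding maps_into_def by (rule det_linear_rows_sum) auto
  also have "\<dots> = (\<Sum>f\<in>maps_into m N. (\<Prod>k<m. \<alpha> (f k) k) * minor m (\<lambda>k. b (f k)) r)"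
  proof (rule sum.cong[OF refl])
    fix f
    have "det (mat\<^sub>r m m (\<lambda>k. ?a k (f k)))
        = prod (\<lambda>k. \<alpha> (f k) k) {0..<m} * det (mat\<^sub>r m m (\<lambda>k. vec m (\<lambda>i. b (f k) (r i))))"
      by (rule det_rows_mul) auto
    then show "det (mat\<^sub>r m m (\<lambda>k. ?a k (f k))) = (\<Prod>k<m. \<alpha> (f k) k) * minor m (\<lambda>k. b (f k)) r"
      unfolding minor_as_rows by (simp add: lessThan_atLeast0)
  qed
  finally show ?thesis .
qed

lemma minor_permute:
  assumes p: "p permutes {0..<m}"
  shows "minor m (\<lambda>k. u (p k)) r = signof p * minor m u r"
proof -
  have "mat\<^sub>r m m (\<lambda>k. vec m (\<lambda>i. u (p k) (r i)))
      = mat m m (\<lambda>(i, j). (mat\<^sub>r m m (\<lambda>k. vec m (\<lambda>i. u k (r i)))) $$ (p i, j))"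
    using permutes_in_image[OF p] by (intro eq_matI) (auto simp: mat_of_rows_def)
  moreover have "det \<dots> = signof p * det (mat\<^sub>r m m (\<lambda>k. vec m (\<lambda>i. u k (r i))))"
    by (rule det_permute_rows[OF _ p]) auto
  ultimately show ?thesis
    by (simp add: minor_as_rows)
qed

lemma minor_transform:
  "minor m (\<lambda>k x. \<Sum>j<m. Z j k * u j x) r = minor m u r * det (mat m m (\<lambda>(j, k). Z j k))"
proof -
  have "mat m m (\<lambda>(i, k). \<Sum>j<m. Z j k * u j (r i))
      = mat m m (\<lambda>(i, k). u k (r i)) * mat m m (\<lambda>(j, k). Z j k)"
    by (rule eq_matI)
       (auto simp: scalar_prod_def lessThan_atLeast0 mult.commute intro!: sum.cong)
  then show ?thesis
    unfolding minor_def by (simp add: det_mult[of _ m])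
qed

lemma minor_dependent:
  assumes c: "\<And>i. i < m \<Longrightarrow> (\<Sum>k<m. c k * u k (r i)) = 0" and k0: "k0 < m" "c k0 \<noteq> 0"
  shows "minor m u r = 0"
proof -
  let ?A = "mat m m (\<lambda>(i, k). u k (r i))"
  have "?A *\<^sub>v vec m c = 0\<^sub>v m"
    by (rule eq_vecI)
       (auto simp: scalar_prod_def lessThan_atLeast0 mult.commute c[unfolded lessThan_atLeast0])
  moreover have "vec m c \<noteq> 0\<^sub>v m"
    using k0 by (metis index_vec index_zero_vec(1))
  ultimately have "det ?A = 0"
    by (subst det_0_iff_vec_prod_zero[of _ m]) (auto intro!: exI[of _ "vec m c"])
  then show ?thesis
    unfolding minor_def .
qed

lemma minor_zero_vector:
  assumes "k0 < m" "u k0 = (\<lambda>x. 0)"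
  shows "minor m u r = 0"
proof (rule minor_dependent[of m "\<lambda>k. if k = k0 then 1 else 0" u r k0])
  show "(\<Sum>k<m. (if k = k0 then 1 else 0) * u k (r i)) = 0" for i
    using assms by (simp add: if_distrib[of "\<lambda>c. c * _"] cong: if_cong)
qed (use assms in auto)

lemma minor_noninj:
  assumes "\<not> inj_on f {0..<m}"
  shows "minor m (\<lambda>k. b (f k)) r = 0"
proof -
  obtain k1 k2 where k: "k1 < m" "k2 < m" "k1 \<noteq> k2" "f k1 = f k2"
    using assms unfolding inj_on_def by auto
  let ?c = "\<lambda>k. if k = k1 then 1 else if k = k2 then - 1 else 0 :: complex"
  show ?thesis
  proof (rule minor_dependent[of m ?c _ r k1])
    fix i
    have "(\<Sum>k<m. ?c k * b (f k) (r i)) = (\<Sum>k\<in>{k1, k2}. ?c k * b (f k) (r i))"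
      by (rule sum.mono_neutral_right) (use k in auto)
    then show "(\<Sum>k<m. ?c k * b (f k) (r i)) = 0"
      using k by simp
  qed (use k in auto)
qed

lemma minor_reindex_sorted:
  assumes inj: "inj_on f {0..<m}"
  obtains s where "\<And>b r. minor m (\<lambda>k. b (f k)) r = s * minor m (\<lambda>k. b (sl (f ` {0..<m}) ! k)) r"
proof -
  let ?I = "f ` {0..<m}"
  have cI: "card ?I = m"
    using card_image[OF inj] by simp
  have bh: "bij_betw ((!) (sl ?I)) {0..<m} ?I"
    by (rule bij_betw_nth) (auto simp: cI lessThan_atLeast0)
  define \<tau> where "\<tau> k = (if k < m then inv_into {0..<m} ((!) (sl ?I)) (f k) else k)" for k
  have "bij_betw (inv_into {0..<m} ((!) (sl ?I)) \<circ> f) {0..<m} {0..<m}"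
    using inj bij_betw_inv_into[OF bh] by (intro bij_betw_trans) (auto simp: bij_betw_def)
  then have "bij_betw \<tau> {0..<m} {0..<m}"
    by (rule bij_betw_cong[THEN iffD1, rotated]) (auto simp: \<tau>_def)
  then have p: "\<tau> permutes {0..<m}"
    by (rule bij_imp_permutes) (auto simp: \<tau>_def)
  have f\<tau>: "sl ?I ! \<tau> k = f k" if "k < m" for k
    using that unfolding \<tau>_def
    by (auto intro!: f_inv_into_f[where f = "(!) (sl ?I)"] simp: bij_betw_imp_surj_on[OF bh])
  have "minor m (\<lambda>k. b (f k)) r = signof \<tau> * minor m (\<lambda>k. b (sl ?I ! k)) r" for b r
  proof -
    have "minor m (\<lambda>k. b (f k)) r = minor m (\<lambda>k. (\<lambda>j. b (sl ?I ! j)) (\<tau> k)) r"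
      using f\<tau> by (intro minor_cong) auto
    also have "\<dots> = signof \<tau> * minor m (\<lambda>j. b (sl ?I ! j)) r"
      by (rule minor_permute[OF p])
    finally show ?thesis .
  qed
  then show ?thesis
    using that by blast
qed

lemma finite_ksub: "finite (ksub n m)"
  unfolding ksub_def by (rule finite_subset[of _ "Pow {..<n}"]) auto

lemma finite_ksub_member: "S \<in> ksub n m \<Longrightarrow> finite S"
  unfolding ksub_def by (auto intro: finite_subset)

lemma sorted_ksub_nth_less:
  assumes S: "S \<in> ksub n m" and i: "i < m"
  shows "sl S ! i < n"
proof -
  have "sl S ! i \<in> set (sl S)"
    using S i finite_ksub_member[OF S] by (intro nth_mem) (simp add: ksub_def)
  then show ?thesis
    using S finite_ksub_member[OF S] unfolding ksub_def by auto
qed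

lemma image_maps_into_ksub:
  assumes "f \<in> maps_into m N" "inj_on f {0..<m}"
  shows "f ` {0..<m} \<in> ksub N m"
  using assms card_image[OF assms(2)] unfolding maps_into_def ksub_def by auto

lemma wedge_subl_minor:
  "finite I \<Longrightarrow> wedge (subl vs I) S = minor (card I) (\<lambda>k. vs ! (sl I ! k)) ((!) (sl S))"
  unfolding wedge_def minor_def subl_def by (intro arg_cong[where f = det] eq_matI) auto

lemma lam_cha_minor: "lam_cha g m T {..<m} = minor m (\<lambda>k x. g x k) ((!) (sl T))"
  unfolding lam_cha_def minor_def
  by (intro arg_cong[where f = det] eq_matI) (auto simp: lessThan_atLeast0)

section \<open>Finite families of vectors\<close>

definition comb :: "nat \<Rightarrow> (nat \<Rightarrow> complex) \<Rightarrow> (nat \<Rightarrow> cvec) \<Rightarrow> cvec" where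
  "comb N c v = (\<lambda>x. \<Sum>l<N. c l * v l x)"

definition fspan :: "nat \<Rightarrow> (nat \<Rightarrow> cvec) \<Rightarrow> cvec set" where
  "fspan m u = range (\<lambda>c. comb m c u)"

definition findep :: "nat \<Rightarrow> (nat \<Rightarrow> cvec) \<Rightarrow> bool" where
  "findep m v \<longleftrightarrow> (\<forall>c. comb m c v = (\<lambda>x. 0) \<longrightarrow> (\<forall>k<m. c k = 0))"

lemma comb_comb: "comb M c (\<lambda>k. comb N (d k) v) = comb N (\<lambda>l. \<Sum>k<M. c k * d k l) v"
  unfolding comb_def
  by (rule ext, simp add: sum_distrib_left sum_distrib_right mult.assoc, rule sum.swap)

lemma comb_cong:
  "(\<And>l. l < N \<Longrightarrow> c l = d l) \<Longrightarrow> (\<And>l. l < N \<Longrightarrow> v l = w l) \<Longrightarrow> comb N c v = comb N d w"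
  unfolding comb_def by (intro ext sum.cong) auto

lemma comb_zero_coeffs: "comb N (\<lambda>l. 0) v = (\<lambda>x. 0)"
  unfolding comb_def by simp

lemma comb_delta: "k < m \<Longrightarrow> comb m (\<lambda>j. if j = k then 1 else 0) u = u k"
  unfolding comb_def by (simp add: if_distrib[of "\<lambda>c. c * _"] cong: if_cong)

lemma lcomb_eq_comb: "lcomb vs c = comb (length vs) c ((!) vs)"
  unfolding lcomb_def comb_def by simp

lemma inV_comb: "(\<And>l. l < N \<Longrightarrow> inV n (v l)) \<Longrightarrow> inV n (comb N c v)"
  unfolding inV_def comb_def by simp

lemma minor_comb:
  "minor m (\<lambda>k. comb N (\<lambda>l. \<alpha> l k) b) r
     = (\<Sum>f\<in>maps_into m N. (\<Prod>k<m. \<alpha> (f k) k) * minor m (\<lambda>k. b (f k)) r)"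
  unfolding comb_def by (rule minor_multilinear)

lemma minor_comb_family:
  "minor m (\<lambda>k. comb m (Z k) w) r = minor m w r * det (mat m m (\<lambda>(j, k). Z k j))"
  unfolding comb_def by (rule minor_transform[of m "\<lambda>j k. Z k j", simplified])

lemma comb_coeffs_unique:
  assumes "lindep_free bs" "length bs = n" "comb n c ((!) bs) = comb n d ((!) bs)" "l < n"
  shows "c l = d l"
proof -
  have "lcomb bs (\<lambda>l. c l - d l) = zv"
    using assms(2,3) unfolding lcomb_eq_comb zv_def comb_def
    by (simp add: fun_eq_iff sum_subtractf left_diff_distrib)
  then show ?thesis
    using assms(1,2,4) unfolding lindep_free_def by force
qed

lemma basis_coords:
  assumes "is_basis n bs" "\<And>k. k < m \<Longrightarrow> inV n (u k)"
  obtains \<alpha> where "\<And>k. k < m \<Longrightarrow> u k = comb n (\<lambda>l. \<alpha> l k) ((!) bs)"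
proof -
  have "\<exists>c. u k = comb n c ((!) bs)" if "k < m" for k
  proof -
    have "u k \<in> lspan bs"
      using assms that unfolding is_basis_def Vsp_def by auto
    then show ?thesis
      using assms(1) unfolding lspan_def is_basis_def lcomb_eq_comb by auto
  qed
  then obtain C where "\<And>k. k < m \<Longrightarrow> u k = comb n (C k) ((!) bs)"
    by metis
  then show ?thesis
    using that[of "\<lambda>l k. C k l"] by blast
qed

lemma zero_in_fspan: "(\<lambda>x. 0) \<in> fspan m u"
  unfolding fspan_def using comb_zero_coeffs by (metis rangeI)

lemma zv_in_fspan: "zv \<in> fspan m u"
  using zero_in_fspan unfolding zv_def .

lemma fspan_member: "k < m \<Longrightarrow> u k \<in> fspan m u"
  unfolding fspan_def using comb_delta by (metis rangeI)

lemma fspan_comb_coeffs: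
  assumes "\<And>k. k < K \<Longrightarrow> x k \<in> fspan L y"
  shows "\<exists>Z. \<forall>k<K. x k = comb L (Z k) y"
proof -
  have "\<forall>k. \<exists>c. k < K \<longrightarrow> x k = comb L c y"
    using assms unfolding fspan_def by blast
  then show ?thesis
    by metis
qed

lemma fspan_subset:
  assumes "\<And>k. k < K \<Longrightarrow> x k \<in> fspan L y"
  shows "fspan K x \<subseteq> fspan L y"
proof
  obtain Z where Z: "\<And>k. k < K \<Longrightarrow> x k = comb L (Z k) y"
    using fspan_comb_coeffs[of K x L y] assms by auto
  fix z
  assume "z \<in> fspan K x"
  then obtain c where "z = comb K c x"
    unfolding fspan_def by auto
  also have "\<dots> = comb K c (\<lambda>k. comb L (Z k) y)"
    using Z by (intro comb_cong) auto
  also have "\<dots> = comb L (\<lambda>j. \<Sum>k<K. c k * Z k j) y"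
    by (rule comb_comb)
  finally show "z \<in> fspan L y"
    unfolding fspan_def by auto
qed

lemma fspan_mono: "d \<le> d' \<Longrightarrow> fspan d u \<subseteq> fspan d' u"
  by (intro fspan_subset fspan_member) simp

lemma fspan_cong: "(\<And>k. k < m \<Longrightarrow> u k = v k) \<Longrightarrow> fspan m u = fspan m v"
  unfolding fspan_def using comb_cong by (metis (no_types, lifting) image_cong)

lemma fspan_transform:
  assumes "\<And>k. k < m \<Longrightarrow> u k = comb m (Q k) v" "\<And>j. j < m \<Longrightarrow> v j = comb m (P j) u"
  shows "fspan m u = fspan m v"
  using assms by (intro equalityI fspan_subset) (auto simp: fspan_def)

lemma not_findep_in_smaller_fspan:
  assumes x: "\<And>k. k < K \<Longrightarrow> x k \<in> fspan L y" and LK: "L < K"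
  shows "\<not> findep K x"
proof -
  obtain Z where Z: "\<And>k. k < K \<Longrightarrow> x k = comb L (Z k) y"
    using fspan_comb_coeffs[of K x L y] x by auto
  define Zm where "Zm = mat K K (\<lambda>(j, k). if j < L then Z k j else (0::complex))"
  have Zc: "Zm \<in> carrier_mat K K"
    unfolding Zm_def by simp
  have "transpose_mat Zm *\<^sub>v unit_vec K L = 0\<^sub>v K"
    by (rule eq_vecI) (use LK in \<open>auto simp: Zm_def\<close>)
  moreover have "unit_vec K L \<noteq> (0\<^sub>v K :: complex vec)"
    using LK by (metis index_unit_vec(1) index_zero_vec(1) zero_neq_one)
  ultimately have "det (transpose_mat Zm) = 0"
    by (subst det_0_iff_vec_prod_zero[of _ K]) (use Zc in \<open>auto intro!: exI[of _ "unit_vec K L"]\<close>)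
  then have "det Zm = 0"
    using det_transpose[OF Zc] by simp
  then obtain v where v: "v \<in> carrier_vec K" "v \<noteq> 0\<^sub>v K" "Zm *\<^sub>v v = 0\<^sub>v K"
    using det_0_iff_vec_prod_zero[OF Zc] by blast
  have "comb K (($) v) x = comb K (($) v) (\<lambda>k. comb L (Z k) y)"
    using Z by (intro comb_cong) auto
  also have "\<dots> = comb L (\<lambda>j. \<Sum>k<K. v $ k * Z k j) y"
    by (rule comb_comb)
  also have "\<dots> = comb L (\<lambda>j. 0) y"
  proof (rule comb_cong)
    fix j
    assume j: "j < L"
    have "(Zm *\<^sub>v v) $ j = 0"
      using v(3) j LK by simp
    then show "(\<Sum>k<K. v $ k * Z k j) = 0"
      using j LK v(1) by (simp add: Zm_def scalar_prod_def lessThan_atLeast0 mult.commute)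
  qed simp
  finally have "comb K (($) v) x = (\<lambda>x. 0)"
    by (simp add: comb_zero_coeffs)
  moreover have "\<exists>k<K. v $ k \<noteq> 0"
    using v(1,2) by (metis eq_vecI carrier_vecD index_zero_vec)
  ultimately show ?thesis
    unfolding findep_def by blast
qed

lemma findep_extend:
  assumes ind: "findep k w" and v: "v \<notin> fspan k w"
  shows "findep (Suc k) (w(k := v))"
  unfolding findep_def
proof (intro allI impI)
  fix c j
  assume z: "comb (Suc k) c (w(k := v)) = (\<lambda>x. 0)" and j: "j < Suc k"
  have "comb k c (w(k := v)) = comb k c w"
    by (rule comb_cong) auto
  then have split: "comb (Suc k) c (w(k := v)) = (\<lambda>x. comb k c w x + c k * v x)"
    unfolding comb_def by (simp add: fun_eq_iff)
  have ck: "c k = 0"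
  proof (rule ccontr)
    assume ck: "c k \<noteq> 0"
    have "v = comb k (\<lambda>j. - c j / c k) w"
    proof (rule ext)
      fix x
      have "comb k c w x + c k * v x = 0"
        using z split by metis
      then have "v x = - (comb k c w x) / c k"
        using ck by (simp add: field_simps add_eq_0_iff)
      then show "v x = comb k (\<lambda>j. - c j / c k) w x"
        unfolding comb_def by (simp add: sum_divide_distrib sum_negf)
    qed
    with v show False
      unfolding fspan_def by auto
  qed
  then have "comb k c w = (\<lambda>x. 0)"
    using z split by (simp add: fun_eq_iff)
  then have "\<forall>j<k. c j = 0"
    using ind unfolding findep_def by blast
  with ck j show "c j = 0"
    using less_Suc_eq by auto
qed

lemma fspan_eq_if_findep:
  assumes ind: "findep K x" and sub: "\<And>k. k < K \<Longrightarrow> x k \<in> fspan K y"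
  shows "fspan K x = fspan K y"
proof
  show "fspan K x \<subseteq> fspan K y"
    by (rule fspan_subset[OF sub])
  have "y j \<in> fspan K x" if j: "j < K" for j
  proof (rule ccontr)
    assume "y j \<notin> fspan K x"
    then have "findep (Suc K) (x(K := y j))"
      by (rule findep_extend[OF ind])
    moreover have "(x(K := y j)) k \<in> fspan K y" if "k < Suc K" for k
      using that sub fspan_member[OF j] by (auto simp: less_Suc_eq)
    ultimately show False
      using not_findep_in_smaller_fspan[of "Suc K" "x(K := y j)" K y] by simp
  qed
  then show "fspan K y \<subseteq> fspan K x"
    by (rule fspan_subset)
qed

lemma findep_if_minor_nonzero:
  assumes "minor m v r \<noteq> 0"
  shows "findep m v"
  unfolding findep_def
proof (intro allI impI, rule ccontr)
  fix c k0
  assume z: "comb m c v = (\<lambda>x. 0)" and "k0 < m" "c k0 \<noteq> 0"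
  moreover have "\<And>i. (\<Sum>k<m. c k * v k (r i)) = 0"
    using z unfolding comb_def by metis
  ultimately have "minor m v r = 0"
    by (intro minor_dependent[of m c v r k0]) auto
  with assms show False
    by simp
qed

lemma minor_proportional_if_fspan_eq:
  assumes "fspan d v = fspan d w"
  obtains \<mu> where "\<And>r. minor d v r = \<mu> * minor d w r"
proof -
  obtain Z where Z: "\<And>k. k < d \<Longrightarrow> v k = comb d (Z k) w"
    using fspan_comb_coeffs[of d v d w] fspan_member[of _ d v] assms by auto
  have "minor d v r = minor d w r * det (mat d d (\<lambda>(j, k). Z k j))" for r
    using Z minor_cong[of d v "\<lambda>k. comb d (Z k) w"] minor_comb_family by simp
  then show ?thesis
    using that by (metis mult.commute)
qed

lemma det_nonzero_if_findep:
  assumes wV: "\<And>i. i < n \<Longrightarrow> inV n (w i)" and iw: "findep n w"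
  shows "det (mat n n (\<lambda>(i, k). w k i)) \<noteq> 0"
proof
  let ?M = "mat n n (\<lambda>(i, k). w k i)"
  assume "det ?M = 0"
  then obtain v where v: "v \<in> carrier_vec n" "v \<noteq> 0\<^sub>v n" "?M *\<^sub>v v = 0\<^sub>v n"
    using det_0_iff_vec_prod_zero[of ?M n] by auto
  have "comb n (($) v) w x = 0" for x
  proof (cases "x < n")
    case True
    have "(?M *\<^sub>v v) $ x = 0"
      using v(3) True by simp
    then show ?thesis
      using True v(1) unfolding comb_def by (simp add: scalar_prod_def lessThan_atLeast0 mult.commute)
  next
    case False
    then show ?thesis
      using wV unfolding comb_def inV_def by simp
  qed
  then have "\<forall>k<n. v $ k = 0"
    using iw unfolding findep_def by blast
  then have "v = 0\<^sub>v n"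
    using v(1) by (intro eq_vecI) auto
  with v(2) show False
    by simp
qed

section \<open>Reduced echelon form\<close>

lemma echelon_form_exists:
  fixes \<alpha> :: "nat \<Rightarrow> nat \<Rightarrow> complex"
  obtains \<alpha>' p Q P where
    "\<And>k l. k < m \<Longrightarrow> l < n \<Longrightarrow> \<alpha> l k = (\<Sum>j<m. Q k j * \<alpha>' l j)"
    "\<And>j l. j < m \<Longrightarrow> l < n \<Longrightarrow> \<alpha>' l j = (\<Sum>k<m. P j k * \<alpha> l k)"
    "\<And>k. k < m \<Longrightarrow> p k \<le> n"
    "\<And>k l. k < m \<Longrightarrow> l < p k \<Longrightarrow> \<alpha>' l k = 0"
    "\<And>k. k < m \<Longrightarrow> p k < n \<Longrightarrow> \<alpha>' (p k) k = 1"
    "\<And>k k'. k < m \<Longrightarrow> p k < n \<Longrightarrow> k' < m \<Longrightarrow> k' \<noteq> k \<Longrightarrow> \<alpha>' (p k) k' = 0"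
    "\<And>k. Suc k < m \<Longrightarrow> p k < p (Suc k) \<or> p (Suc k) = n"
proof -
  define A where "A = mat m n (\<lambda>(k, l). \<alpha> l k)"
  have A: "A \<in> carrier_mat m n"
    unfolding A_def by simp
  define C where "C = gauss_jordan_single A"
  note gj = gauss_jordan_single[OF A C_def[symmetric]]
  obtain P Q where CPA: "C = P * A" and P: "P \<in> carrier_mat m m" and Q: "Q \<in> carrier_mat m m"
    and QP: "Q * P = 1\<^sub>m m"
    using gj(4) by blast
  have C: "C \<in> carrier_mat m n"
    by (rule gj(2))
  obtain p where piv: "pivot_fun C p n"
    using gj(3) C unfolding row_echelon_form_def by auto
  note pivot = pivot_funD[OF carrier_matD(1)[OF C] piv]
  have AQC: "A = Q * C"
  proof -
    have "A = (Q * P) * A"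
      using A QP by simp
    also have "\<dots> = Q * C"
      using Q P A CPA by (simp add: assoc_mult_mat)
    finally show ?thesis .
  qed
  have QC: "\<alpha> l k = (\<Sum>j<m. Q $$ (k, j) * C $$ (j, l))" if "k < m" "l < n" for k l
  proof -
    have "\<alpha> l k = (Q * C) $$ (k, l)"
      using that AQC unfolding A_def by (metis case_prod_conv index_mat(1))
    then show ?thesis
      using Q C that by (simp add: scalar_prod_def lessThan_atLeast0)
  qed
  have PA: "C $$ (j, l) = (\<Sum>k<m. P $$ (j, k) * \<alpha> l k)" if "j < m" "l < n" for j l
    using that CPA P A by (simp add: scalar_prod_def lessThan_atLeast0 A_def)
  show ?thesis
  proof (rule that[of "\<lambda>k j. Q $$ (k, j)" "\<lambda>l k. C $$ (k, l)" "\<lambda>j k. P $$ (j, k)" p])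
    show "\<And>k. Suc k < m \<Longrightarrow> p k < p (Suc k) \<or> p (Suc k) = n"
      using pivot(3) Suc_lessD by blast
  qed (fact QC PA pivot(1,2,4,5))+
qed

definition echelon :: "nat \<Rightarrow> nat \<Rightarrow> (nat \<Rightarrow> nat \<Rightarrow> complex) \<Rightarrow> (nat \<Rightarrow> nat) \<Rightarrow> bool" where
  "echelon m n \<alpha> p \<longleftrightarrow> (\<forall>k<m. p k < n) \<and> (\<forall>k<m. \<forall>l<p k. \<alpha> l k = 0)
     \<and> (\<forall>k<m. \<alpha> (p k) k = 1 \<and> (\<forall>k'<m. k' \<noteq> k \<longrightarrow> \<alpha> (p k) k' = 0))
     \<and> (\<forall>i j. i < j \<longrightarrow> j < m \<longrightarrow> p i < p j)"

lemma pivots_strict_mono: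
  fixes p :: "nat \<Rightarrow> nat"
  assumes "\<And>k. k < m \<Longrightarrow> p k < n" and "\<And>k. Suc k < m \<Longrightarrow> p k < p (Suc k) \<or> p (Suc k) = n"
    and "i < j" "j < m"
  shows "p i < p j"
  using assms(3,4)
proof (induction j)
  case (Suc j)
  then have "p j < p (Suc j)"
    using assms(1)[of "Suc j"] assms(2)[of j] by auto
  then show ?case
    using Suc by (cases "i = j") auto
qed simp

lemma echelon_pivot_ge:
  assumes "echelon m n \<alpha> p"
  shows "k < m \<Longrightarrow> k \<le> p k"
proof (induction k)
  case (Suc k)
  then have "p k < p (Suc k)"
    using assms unfolding echelon_def by auto
  with Suc show ?case
    by auto
qed auto

lemma echelon_initial_rows:
  assumes "echelon m n \<alpha> p" "a \<le> m" "\<forall>k<a. p k = k" "l < a" "k < m"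
  shows "\<alpha> l k = (if l = k then 1 else 0)"
proof -
  have pl: "p l = l" and lm: "l < m"
    using assms(2-4) by simp_all
  then have "\<alpha> l l = 1" "\<forall>k'<m. k' \<noteq> l \<longrightarrow> \<alpha> l k' = 0"
    using assms(1) unfolding echelon_def by metis+
  then show ?thesis
    using assms(5) by auto
qed

text \<open>Compare the sums of \<open>f\<close> and of the identity over \<open>{..<a}\<close>.\<close>
lemma inj_ge_id_fixes_prefix:
  fixes f :: "nat \<Rightarrow> nat"
  assumes inj: "inj_on f {0..<m}" and ge: "\<And>k. k < m \<Longrightarrow> k \<le> f k"
    and sub: "{..<a} \<subseteq> f ` {0..<m}"
  shows "a \<le> m" "\<forall>k<a. f k = k"
proof -
  define K where "K = {k\<in>{0..<m}. f k < a}"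
  have fK: "f ` K = {..<a}"
  proof
    show "f ` K \<subseteq> {..<a}"
      unfolding K_def by auto
    show "{..<a} \<subseteq> f ` K"
    proof
      fix i
      assume i: "i \<in> {..<a}"
      then obtain k where "k \<in> {0..<m}" "i = f k"
        using sub by auto
      with i show "i \<in> f ` K"
        unfolding K_def by auto
    qed
  qed
  have injK: "inj_on f K"
    using inj unfolding K_def by (rule inj_on_subset) auto
  have cK: "card K = a"
    using card_image[OF injK] fK by simp
  have "K \<subseteq> {..<a}"
    unfolding K_def using ge by (auto intro: le_less_trans)
  then have Keq: "K = {..<a}"
    by (intro card_subset_eq) (auto simp: cK)
  have "card K \<le> card {0..<m}"
    by (rule card_mono) (auto simp: K_def)
  then show am: "a \<le> m"
    using cK by simp
  have fa: "f ` {..<a} = {..<a}" and inja: "inj_on f {..<a}"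
    using fK injK Keq by simp_all
  show "\<forall>k<a. f k = k"
  proof (rule ccontr)
    assume "\<not> (\<forall>k<a. f k = k)"
    then obtain k0 where k0: "k0 < a" "f k0 \<noteq> k0"
      by auto
    have "(\<Sum>k<a. k) < (\<Sum>k<a. f k)"
    proof (rule sum_strict_mono_ex1)
      show "\<forall>x\<in>{..<a}. x \<le> f x"
        using ge am by auto
      show "\<exists>x\<in>{..<a}. x < f x"
        using ge[of k0] am k0 by (intro bexI[of _ k0]) auto
    qed auto
    also have "(\<Sum>k<a. f k) = (\<Sum>j\<in>f ` {..<a}. j)"
      by (simp add: sum.reindex[OF inja])
    also have "\<dots> = (\<Sum>k<a. k)"
      using fa by simp
    finally show False
      by simp
  qed
qed

lemma echelon_leading_pivots:
  assumes e: "echelon m n \<alpha> p" and f: "f \<in> maps_into m n" and inj: "inj_on f {0..<m}"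
    and sub: "{..<a} \<subseteq> f ` {0..<m}" and nz: "(\<Prod>k<m. \<alpha> (f k) k) \<noteq> 0"
  shows "a \<le> m" "\<forall>k<a. f k = k" "\<forall>k<a. p k = k"
proof -
  have pf: "p k \<le> f k" if "k < m" for k
  proof (rule ccontr)
    assume "\<not> p k \<le> f k"
    then have "\<alpha> (f k) k = 0"
      using e that unfolding echelon_def by auto
    with nz that show False
      by (auto simp: prod_zero_iff)
  qed
  have "k \<le> f k" if "k < m" for k
    using pf[OF that] echelon_pivot_ge[OF e that] by simp
  then show am: "a \<le> m" and fid: "\<forall>k<a. f k = k"
    using inj_ge_id_fixes_prefix[OF inj _ sub] by auto
  show "\<forall>k<a. p k = k"
  proof (intro allI impI)
    fix k
    assume "k < a"
    then have "k < m" "f k = k"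
      using am fid by auto
    moreover have "p k \<le> f k" "k \<le> p k"
      using pf echelon_pivot_ge[OF e] \<open>k < m\<close> by simp_all
    ultimately show "p k = k"
      by linarith
  qed
qed

lemma echelon_terms_vanish:
  assumes e: "echelon m n \<alpha> p" and f: "f \<in> maps_into m n"
    and not_initial: "\<not> (a \<le> m \<and> (\<forall>k<a. p k = k))"
  shows "(\<Prod>k<m. \<alpha> (f k) k) *
    (if {..<a} \<subseteq> f ` {0..<m} \<and> f ` {0..<m} \<subseteq> {..<a + b} then minor m (\<lambda>k. B (f k)) r else 0) = 0"
proof (cases "inj_on f {0..<m} \<and> {..<a} \<subseteq> f ` {0..<m} \<and> (\<Prod>k<m. \<alpha> (f k) k) \<noteq> 0")
  case True
  then have "a \<le> m \<and> (\<forall>k<a. p k = k)"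
    using echelon_leading_pivots(1,3)[OF e f] by blast
  with not_initial show ?thesis
    by blast
qed (auto simp: minor_noninj)

text \<open>Coordinates, in the target basis \<open>F @ G @ H\<close>, of the images of an echelon family: the
  first \<open>a\<close> vectors become \<open>F\<^sub>1, \<dots>, F\<^sub>a\<close>, the others keep only their \<open>g\<close>-coordinates.\<close>
definition image_coeffs :: "nat \<Rightarrow> nat \<Rightarrow> (nat \<Rightarrow> nat \<Rightarrow> complex) \<Rightarrow> nat \<Rightarrow> nat \<Rightarrow> complex" where
  "image_coeffs a b \<alpha> l k =
     (if k < a then (if l = k then 1 else 0) else if a \<le> l \<and> l < a + b then \<alpha> l k else 0)"

lemma image_coeffs_prod_nonzero:
  assumes e: "echelon m n \<alpha> p" and am: "a \<le> m" and pa: "\<forall>k<a. p k = k"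
    and nz: "(\<Prod>k<m. image_coeffs a b \<alpha> (f k) k) \<noteq> 0"
  shows "{..<a} \<subseteq> f ` {0..<m} \<and> f ` {0..<m} \<subseteq> {..<a + b}"
    "(\<Prod>k<m. image_coeffs a b \<alpha> (f k) k) = (\<Prod>k<m. \<alpha> (f k) k)"
proof -
  have nz': "image_coeffs a b \<alpha> (f k) k \<noteq> 0" if "k < m" for k
    using nz that by (auto simp: prod_zero_iff)
  have f1: "f k = k" if "k < a" for k
    using nz'[of k] that am unfolding image_coeffs_def by (auto split: if_splits)
  have f2: "a \<le> f k \<and> f k < a + b" if "a \<le> k" "k < m" for k
    using nz'[of k] that unfolding image_coeffs_def by (auto split: if_splits)
  have "{..<a} \<subseteq> f ` {0..<m}"
  proof
    fix i
    assume "i \<in> {..<a}"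
    then show "i \<in> f ` {0..<m}"
      using f1[of i] am by (auto intro!: image_eqI[of _ _ i])
  qed
  moreover have "f ` {0..<m} \<subseteq> {..<a + b}"
  proof
    fix y
    assume "y \<in> f ` {0..<m}"
    then obtain k where "k < m" "y = f k"
      by auto
    then show "y \<in> {..<a + b}"
      using f1[of k] f2[of k] by (cases "k < a") auto
  qed
  ultimately show "{..<a} \<subseteq> f ` {0..<m} \<and> f ` {0..<m} \<subseteq> {..<a + b}" ..
  show "(\<Prod>k<m. image_coeffs a b \<alpha> (f k) k) = (\<Prod>k<m. \<alpha> (f k) k)"
  proof (rule prod.cong[OF refl])
    fix k
    assume "k \<in> {..<m}"
    then show "image_coeffs a b \<alpha> (f k) k = \<alpha> (f k) k"
      using f1[of k] f2[of k] echelon_initial_rows[OF e am pa, of k k]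
      unfolding image_coeffs_def by (cases "k < a") auto
  qed
qed

lemma echelon_prod_nonzero:
  assumes e: "echelon m n \<alpha> p" and am: "a \<le> m" and pa: "\<forall>k<a. p k = k"
    and f: "f \<in> maps_into m n" and inj: "inj_on f {0..<m}"
    and c: "{..<a} \<subseteq> f ` {0..<m} \<and> f ` {0..<m} \<subseteq> {..<a + b}"
    and nz: "(\<Prod>k<m. \<alpha> (f k) k) \<noteq> 0"
  shows "(\<Prod>k<m. image_coeffs a b \<alpha> (f k) k) = (\<Prod>k<m. \<alpha> (f k) k)"
proof (rule prod.cong[OF refl])
  fix k
  assume k: "k \<in> {..<m}"
  have fid: "\<forall>k<a. f k = k"
    using c by (intro echelon_leading_pivots(2)[OF e f inj _ nz]) simp
  have "a \<le> f k" if "a \<le> k"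
  proof (rule ccontr)
    assume "\<not> a \<le> f k"
    moreover have "k \<le> p k"
      using echelon_pivot_ge[OF e] k by simp
    ultimately have "f k < p k"
      using that by linarith
    then have "\<alpha> (f k) k = 0"
      using e k unfolding echelon_def by auto
    with nz k show False
      by (auto simp: prod_zero_iff)
  qed
  moreover have "f k < a + b"
    using c k by (meson atLeastLessThan_iff image_subset_iff le0 lessThan_iff)
  ultimately show "image_coeffs a b \<alpha> (f k) k = \<alpha> (f k) k"
    using fid echelon_initial_rows[OF e am pa, of k k] k unfolding image_coeffs_def
    by (cases "k < a") auto
qed

lemma echelon_image_coeffs:
  assumes e: "echelon m n \<alpha> p" and am: "a \<le> m" and pa: "\<forall>k<a. p k = k"
    and f: "f \<in> maps_into m n" and inj: "inj_on f {0..<m}"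
  shows "(\<Prod>k<m. \<alpha> (f k) k) * (if {..<a} \<subseteq> f ` {0..<m} \<and> f ` {0..<m} \<subseteq> {..<a + b} then 1 else 0)
       = (\<Prod>k<m. image_coeffs a b \<alpha> (f k) k)"
proof (cases "(\<Prod>k<m. image_coeffs a b \<alpha> (f k) k) = 0")
  case True
  show ?thesis
  proof (cases "{..<a} \<subseteq> f ` {0..<m} \<and> f ` {0..<m} \<subseteq> {..<a + b}")
    case c: True
    have z: "(\<Prod>k<m. \<alpha> (f k) k) = 0"
    proof (rule ccontr)
      assume nz: "(\<Prod>k<m. \<alpha> (f k) k) \<noteq> 0"
      then have "(\<Prod>k<m. image_coeffs a b \<alpha> (f k) k) = (\<Prod>k<m. \<alpha> (f k) k)"
        by (rule echelon_prod_nonzero[OF e am pa f inj c])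
      with True nz show False
        by argo
    qed
    show ?thesis
      unfolding z True by simp
  next
    case False
    then show ?thesis
      using True by (simp only: if_not_P if_False mult_zero_right)
  qed
next
  case False
  note image = image_coeffs_prod_nonzero[OF e am pa False]
  show ?thesis
    unfolding if_P[OF image(1)] image(2) by simp
qed

lemma echelon_reduction:
  assumes bs: "is_basis n bs" and u: "\<And>k. k < m \<Longrightarrow> inV n (u k)"
  shows "(\<forall>r. minor m u r = 0) \<or>
    (\<exists>\<alpha> p \<kappa>. echelon m n \<alpha> p \<and> fspan m u = fspan m (\<lambda>k. comb n (\<lambda>l. \<alpha> l k) ((!) bs))
       \<and> (\<forall>r. minor m u r = \<kappa> * minor m (\<lambda>k. comb n (\<lambda>l. \<alpha> l k) ((!) bs)) r))"
proof -
  obtain \<alpha> where u\<alpha>: "\<And>k. k < m \<Longrightarrow> u k = comb n (\<lambda>l. \<alpha> l k) ((!) bs)"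
    using basis_coords[of n bs m u] bs u by blast
  obtain \<alpha>' p Q P where
    Q: "\<And>k l. k < m \<Longrightarrow> l < n \<Longrightarrow> \<alpha> l k = (\<Sum>j<m. Q k j * \<alpha>' l j)" and
    P: "\<And>j l. j < m \<Longrightarrow> l < n \<Longrightarrow> \<alpha>' l j = (\<Sum>k<m. P j k * \<alpha> l k)" and
    p_le: "\<And>k. k < m \<Longrightarrow> p k \<le> n" and
    below: "\<And>k l. k < m \<Longrightarrow> l < p k \<Longrightarrow> \<alpha>' l k = 0" and
    pivot: "\<And>k. k < m \<Longrightarrow> p k < n \<Longrightarrow> \<alpha>' (p k) k = 1" and
    column: "\<And>k k'. k < m \<Longrightarrow> p k < n \<Longrightarrow> k' < m \<Longrightarrow> k' \<noteq> k \<Longrightarrow> \<alpha>' (p k) k' = 0" and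
    step: "\<And>k. Suc k < m \<Longrightarrow> p k < p (Suc k) \<or> p (Suc k) = n"
    by (rule echelon_form_exists[of m n \<alpha>], rule that)
  define v where "v k = comb n (\<lambda>l. \<alpha>' l k) ((!) bs)" for k
  have uQ: "u k = comb m (Q k) v" if "k < m" for k
  proof -
    have "comb m (Q k) v = comb n (\<lambda>l. \<Sum>j<m. Q k j * \<alpha>' l j) ((!) bs)"
      unfolding v_def comb_comb ..
    also have "\<dots> = u k"
      using Q that u\<alpha> by (auto intro: comb_cong)
    finally show ?thesis ..
  qed
  have vP: "v j = comb m (P j) u" if "j < m" for j
  proof -
    have "comb m (P j) u = comb m (P j) (\<lambda>k. comb n (\<lambda>l. \<alpha> l k) ((!) bs))"
      using u\<alpha> by (auto intro: comb_cong)
    also have "\<dots> = v j"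
      unfolding comb_comb v_def using P that by (auto intro: comb_cong)
    finally show ?thesis ..
  qed
  define \<kappa> where "\<kappa> = det (mat m m (\<lambda>(j, k). Q k j))"
  have minor_u: "minor m u r = \<kappa> * minor m v r" for r
    using minor_cong[of m u "\<lambda>k. comb m (Q k) v", OF uQ] minor_comb_family
    unfolding \<kappa>_def by simp
  show ?thesis
  proof (cases "\<forall>k<m. p k < n")
    case False
    then obtain k0 where k0: "k0 < m" "\<not> p k0 < n"
      by auto
    have "v k0 = comb n (\<lambda>l. 0) ((!) bs)"
      unfolding v_def using below k0 by (intro comb_cong) auto
    then have "minor m v r = 0" for r
      by (intro minor_zero_vector[OF k0(1)]) (simp add: comb_zero_coeffs)
    then show ?thesis
      using minor_u by simp
  next
    case True
    then have "p i < p j" if "i < j" "j < m" for i j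
      using step that by (intro pivots_strict_mono[of m p n]) auto
    then have "echelon m n \<alpha>' p"
      unfolding echelon_def using True below pivot column by simp
    moreover have "fspan m u = fspan m v"
      using uQ vP by (rule fspan_transform)
    ultimately show ?thesis
      using minor_u unfolding v_def by blast
  qed
qed

section \<open>The action of \<open>\<lambda>\<^sup>m(P)\<close> on decomposable vectors\<close>

lemma lamP_minor_expansion:
  assumes M: "\<forall>I\<in>ksub n m. \<forall>T\<in>ksub n m.
         (\<Sum>S\<in>ksub n m. M T S * wedge (subl bs I) S)
         = (if {..<a} \<subseteq> I \<and> I \<subseteq> {..<a + b} then wedge (subl Bs I) T else 0)"
    and T: "T \<in> ksub n m"
  shows "(\<Sum>S\<in>ksub n m. M T S * minor m (\<lambda>k. comb n (\<lambda>l. \<alpha> l k) ((!) bs)) ((!) (sl S)))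
   = (\<Sum>f\<in>maps_into m n. (\<Prod>k<m. \<alpha> (f k) k) *
        (if {..<a} \<subseteq> f ` {0..<m} \<and> f ` {0..<m} \<subseteq> {..<a + b}
         then minor m (\<lambda>k. Bs ! (f k)) ((!) (sl T)) else 0))"
proof -
  have "(\<Sum>S\<in>ksub n m. M T S * minor m (\<lambda>k. comb n (\<lambda>l. \<alpha> l k) ((!) bs)) ((!) (sl S)))
     = (\<Sum>f\<in>maps_into m n. (\<Prod>k<m. \<alpha> (f k) k) *
          (\<Sum>S\<in>ksub n m. M T S * minor m (\<lambda>k. bs ! (f k)) ((!) (sl S))))"
    unfolding minor_comb sum_distrib_left
    by (subst sum.swap) (simp add: mult.assoc mult.left_commute)
  also have "\<dots> = (\<Sum>f\<in>maps_into m n. (\<Prod>k<m. \<alpha> (f k) k) *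
        (if {..<a} \<subseteq> f ` {0..<m} \<and> f ` {0..<m} \<subseteq> {..<a + b}
         then minor m (\<lambda>k. Bs ! (f k)) ((!) (sl T)) else 0))"
  proof (rule sum.cong[OF refl])
    fix f
    assume f: "f \<in> maps_into m n"
    let ?I = "f ` {0..<m}"
    show "(\<Prod>k<m. \<alpha> (f k) k) * (\<Sum>S\<in>ksub n m. M T S * minor m (\<lambda>k. bs ! (f k)) ((!) (sl S))) =
         (\<Prod>k<m. \<alpha> (f k) k) * (if {..<a} \<subseteq> ?I \<and> ?I \<subseteq> {..<a + b}
           then minor m (\<lambda>k. Bs ! (f k)) ((!) (sl T)) else 0)"
    proof (cases "inj_on f {0..<m}")
      case False
      then show ?thesis
        by (simp add: minor_noninj)
    next
      case True
      have I: "?I \<in> ksub n m"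
        by (rule image_maps_into_ksub[OF f True])
      have cI: "card ?I = m"
        using card_image[OF True] by simp
      obtain s where s: "\<And>b r. minor m (\<lambda>k. b (f k)) r = s * minor m (\<lambda>k. b (sl ?I ! k)) r"
        using minor_reindex_sorted[OF True] by blast
      have "(\<Sum>S\<in>ksub n m. M T S * minor m (\<lambda>k. bs ! (f k)) ((!) (sl S)))
          = s * (\<Sum>S\<in>ksub n m. M T S * wedge (subl bs ?I) S)"
        unfolding s[of "(!) bs"] wedge_subl_minor[OF finite_imageI[OF finite_atLeastLessThan]] cI
        by (simp add: sum_distrib_left mult.left_commute)
      also have "\<dots> = (if {..<a} \<subseteq> ?I \<and> ?I \<subseteq> {..<a + b}
           then minor m (\<lambda>k. Bs ! (f k)) ((!) (sl T)) else 0)"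
      proof -
        have "(\<Sum>S\<in>ksub n m. M T S * wedge (subl bs ?I) S)
            = (if {..<a} \<subseteq> ?I \<and> ?I \<subseteq> {..<a + b} then wedge (subl Bs ?I) T else 0)"
          using M I T by blast
        moreover have "wedge (subl Bs ?I) T = minor m (\<lambda>k. Bs ! (sl ?I ! k)) ((!) (sl T))"
          using wedge_subl_minor[OF finite_imageI[OF finite_atLeastLessThan]] cI by simp
        ultimately show ?thesis
          unfolding s[of "(!) Bs"] by simp
      qed
      finally show ?thesis
        by simp
    qed
  qed
  finally show ?thesis .
qed

definition rel_image :: "(cvec \<times> cvec) set \<Rightarrow> cvec set \<Rightarrow> cvec set" where
  "rel_image P U = {w. \<exists>x\<in>U. (x, w) \<in> P}"

lemma sum_delta_less: "(\<Sum>k<(m::nat). if k = l then g k else 0) = (if l < m then g l else (0::complex))"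
  by (subst sum.delta) auto

locale adapted_bases =
  fixes n :: nat and fs gs hs Fs Gs Hs :: "cvec list"
  assumes lengths: "length fs = length Fs" "length gs = length Gs" "length hs = length Hs"
    and source_basis: "is_basis n (fs @ gs @ hs)"
    and target_basis: "is_basis n (Fs @ Gs @ Hs)"
begin

abbreviation src :: "cvec list" where
  "src \<equiv> fs @ gs @ hs"

abbreviation tgt :: "cvec list" where
  "tgt \<equiv> Fs @ Gs @ Hs"

definition rel :: "(cvec \<times> cvec) set" where
  "rel = pspan (map (\<lambda>F. (zv, F)) Fs @ zip gs Gs @ map (\<lambda>h. (h, zv)) hs)"

lemma dim_eq: "n = length fs + length gs + length hs"
  using source_basis unfolding is_basis_def by simp

lemma inV_tgt_nth:
  assumes "l < n"
  shows "inV n (tgt ! l)"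
proof -
  have "tgt ! l \<in> set tgt"
    using assms target_basis unfolding is_basis_def by (intro nth_mem) simp
  then show ?thesis
    using target_basis unfolding is_basis_def by blast
qed

lemma mem_rel:
  "(x, w) \<in> rel \<longleftrightarrow> (\<exists>c. x = comb n (\<lambda>l. if l < length fs then 0 else c l) ((!) src)
      \<and> w = comb n (\<lambda>l. if l < length fs + length gs then c l else 0) ((!) tgt))"
proof -
  let ?ps = "map (\<lambda>F. (zv, F)) Fs @ zip gs Gs @ map (\<lambda>h. (h, zv)) hs"
  have len: "length ?ps = n"
    using lengths dim_eq by simp
  have nth: "?ps ! l = (if l < length fs then zv else src ! l,
      if l < length fs + length gs then tgt ! l else zv)" if "l < n" for l
    using that lengths dim_eq by (auto simp: nth_append)
  have fst: "map fst ?ps ! l = (if l < length fs then zv else src ! l)"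
    and snd: "map snd ?ps ! l = (if l < length fs + length gs then tgt ! l else zv)" if "l < n" for l
  proof -
    have "map fst ?ps ! l = fst (?ps ! l)" "map snd ?ps ! l = snd (?ps ! l)"
      by (rule nth_map, use len that in simp)+
    then show "map fst ?ps ! l = (if l < length fs then zv else src ! l)"
      "map snd ?ps ! l = (if l < length fs + length gs then tgt ! l else zv)"
      unfolding nth[OF that] by simp_all
  qed
  have "lcomb (map fst ?ps) c = comb n (\<lambda>l. if l < length fs then 0 else c l) ((!) src)" for c
    unfolding lcomb_eq_comb comb_def using fst len by (auto intro!: ext sum.cong simp: zv_def)
  moreover have "lcomb (map snd ?ps) c
      = comb n (\<lambda>l. if l < length fs + length gs then c l else 0) ((!) tgt)" for c
    unfolding lcomb_eq_comb comb_def using snd len by (auto intro!: ext sum.cong simp: zv_def)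
  ultimately have "pcomb ?ps c = (comb n (\<lambda>l. if l < length fs then 0 else c l) ((!) src),
      comb n (\<lambda>l. if l < length fs + length gs then c l else 0) ((!) tgt))" for c
    unfolding pcomb_def by simp
  then show ?thesis
    unfolding rel_def pspan_def by (auto simp: image_iff)
qed

lemma fspan_image_subset_rel_image:
  assumes am: "length fs \<le> m"
    and rows: "\<And>l k. l < length fs \<Longrightarrow> k < m \<Longrightarrow> \<alpha> l k = (if l = k then 1 else 0)"
  shows "fspan m (\<lambda>k. comb n (\<lambda>l. image_coeffs (length fs) (length gs) \<alpha> l k) ((!) tgt))
     \<subseteq> rel_image rel (fspan m (\<lambda>k. comb n (\<lambda>l. \<alpha> l k) ((!) src)))"
    (is "fspan m ?w \<subseteq> rel_image rel (fspan m ?v)")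
proof
  let ?a = "length fs" and ?b = "length gs"
  fix w
  assume "w \<in> fspan m ?w"
  then obtain c where w: "w = comb m c ?w"
    unfolding fspan_def by auto
  define x where "x = comb m (\<lambda>k. if k < ?a then 0 else c k) ?v"
  define \<gamma> where "\<gamma> l = (if l < ?a then c l else (\<Sum>k<m. (if k < ?a then 0 else c k) * \<alpha> l k))" for l
  have "x = comb n (\<lambda>l. if l < ?a then 0 else \<gamma> l) ((!) src)"
    unfolding x_def comb_comb
  proof (rule comb_cong)
    fix l
    show "(\<Sum>k<m. (if k < ?a then 0 else c k) * \<alpha> l k) = (if l < ?a then 0 else \<gamma> l)"
    proof (cases "l < ?a")
      case True
      then show ?thesis
        using rows by (auto intro: sum.neutral)
    qed (simp add: \<gamma>_def)
  qed simp
  moreover have "w = comb n (\<lambda>l. if l < ?a + ?b then \<gamma> l else 0) ((!) tgt)"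
    unfolding w comb_comb
  proof (rule comb_cong)
    fix l
    show "(\<Sum>k<m. c k * image_coeffs ?a ?b \<alpha> l k) = (if l < ?a + ?b then \<gamma> l else 0)"
    proof (cases "l < ?a")
      case True
      then have "(\<Sum>k<m. c k * image_coeffs ?a ?b \<alpha> l k) = (\<Sum>k<m. if k = l then c k else 0)"
        by (intro sum.cong) (auto simp: image_coeffs_def)
      then show ?thesis
        using True am by (simp add: sum_delta_less \<gamma>_def)
    next
      case False
      then show ?thesis
        by (auto simp: image_coeffs_def \<gamma>_def intro!: sum.cong sum.neutral)
    qed
  qed simp
  ultimately have "(x, w) \<in> rel"
    unfolding mem_rel by blast
  moreover have "x \<in> fspan m ?v"
    unfolding x_def fspan_def by auto
  ultimately show "w \<in> rel_image rel (fspan m ?v)"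
    unfolding rel_image_def by auto
qed

lemma rel_image_subset_fspan_image:
  assumes am: "length fs \<le> m"
    and rows: "\<And>l k. l < length fs \<Longrightarrow> k < m \<Longrightarrow> \<alpha> l k = (if l = k then 1 else 0)"
  shows "rel_image rel (fspan m (\<lambda>k. comb n (\<lambda>l. \<alpha> l k) ((!) src)))
     \<subseteq> fspan m (\<lambda>k. comb n (\<lambda>l. image_coeffs (length fs) (length gs) \<alpha> l k) ((!) tgt))"
    (is "rel_image rel (fspan m ?v) \<subseteq> fspan m ?w")
proof
  let ?a = "length fs" and ?b = "length gs"
  fix w
  assume "w \<in> rel_image rel (fspan m ?v)"
  then obtain x where xs: "x \<in> fspan m ?v" and "(x, w) \<in> rel"
    unfolding rel_image_def by auto
  then obtain c where x1: "x = comb n (\<lambda>l. if l < ?a then 0 else c l) ((!) src)"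
    and w1: "w = comb n (\<lambda>l. if l < ?a + ?b then c l else 0) ((!) tgt)"
    unfolding mem_rel by blast
  obtain d where "x = comb m d ?v"
    using xs unfolding fspan_def by auto
  then have x2: "x = comb n (\<lambda>l. \<Sum>k<m. d k * \<alpha> l k) ((!) src)"
    unfolding comb_comb .
  have lf: "lindep_free src" and len: "length src = n"
    using source_basis unfolding is_basis_def by simp_all
  have co: "(if l < ?a then 0 else c l) = (\<Sum>k<m. d k * \<alpha> l k)" if "l < n" for l
    by (rule comb_coeffs_unique[OF lf len _ that]) (use x1 x2 in simp)
  have lz: "d l = 0" if "l < ?a" for l
  proof -
    have "(\<Sum>k<m. d k * \<alpha> l k) = (\<Sum>k<m. if k = l then d k else 0)"
      using rows that by (intro sum.cong) auto
    then show ?thesis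
      using co[of l] that am dim_eq by (simp add: sum_delta_less)
  qed
  define c' where "c' k = (if k < ?a then c k else d k)" for k
  have "comb m c' ?w = w"
    unfolding comb_comb w1
  proof (rule comb_cong)
    fix l
    assume ln: "l < n"
    show "(\<Sum>k<m. c' k * image_coeffs ?a ?b \<alpha> l k) = (if l < ?a + ?b then c l else 0)"
    proof (cases "l < ?a")
      case True
      then have "(\<Sum>k<m. c' k * image_coeffs ?a ?b \<alpha> l k) = (\<Sum>k<m. if k = l then c' k else 0)"
        by (intro sum.cong) (auto simp: image_coeffs_def)
      then show ?thesis
        using True am by (simp add: sum_delta_less c'_def)
    next
      case False
      show ?thesis
      proof (cases "l < ?a + ?b")
        case True
        have "(\<Sum>k<m. c' k * image_coeffs ?a ?b \<alpha> l k) = (\<Sum>k<m. d k * \<alpha> l k)"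
          using True False lz by (intro sum.cong) (auto simp: image_coeffs_def c'_def)
        then show ?thesis
          using co[OF ln] True False by simp
      qed (use False in \<open>auto simp: image_coeffs_def intro!: sum.neutral\<close>)
    qed
  qed simp
  then show "w \<in> fspan m ?w"
    unfolding fspan_def by (metis rangeI)
qed

end

context adapted_bases
begin

lemma lamP_echelon_action:
  assumes M: "\<forall>I\<in>ksub n m. \<forall>T\<in>ksub n m.
         (\<Sum>S\<in>ksub n m. M T S * wedge (subl src I) S)
         = (if {..<length fs} \<subseteq> I \<and> I \<subseteq> {..<length fs + length gs}
            then wedge (subl tgt I) T else 0)"
    and e: "echelon m n \<alpha> p"
  defines "v \<equiv> \<lambda>k. comb n (\<lambda>l. \<alpha> l k) ((!) src)"
  shows "(\<forall>T\<in>ksub n m. (\<Sum>S\<in>ksub n m. M T S * minor m v ((!) (sl S))) = 0) \<or>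
    (\<exists>w. (\<forall>k<m. inV n (w k)) \<and>
       (\<forall>T\<in>ksub n m. (\<Sum>S\<in>ksub n m. M T S * minor m v ((!) (sl S))) = minor m w ((!) (sl T))) \<and>
       fspan m w = rel_image rel (fspan m v))"
proof -
  let ?a = "length fs" and ?b = "length gs"
  let ?c = "\<lambda>f. {..<?a} \<subseteq> f ` {0..<m} \<and> f ` {0..<m} \<subseteq> {..<?a + ?b}"
  have expansion: "(\<Sum>S\<in>ksub n m. M T S * minor m v ((!) (sl S)))
      = (\<Sum>f\<in>maps_into m n. (\<Prod>k<m. \<alpha> (f k) k) *
          (if ?c f then minor m (\<lambda>k. tgt ! (f k)) ((!) (sl T)) else 0))" if "T \<in> ksub n m" for T
    unfolding v_def by (rule lamP_minor_expansion[OF M that])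
  show ?thesis
  proof (cases "?a \<le> m \<and> (\<forall>k<?a. p k = k)")
    case False
    have "(\<Sum>S\<in>ksub n m. M T S * minor m v ((!) (sl S))) = 0" if "T \<in> ksub n m" for T
      unfolding expansion[OF that] using echelon_terms_vanish[OF e _ False] by (intro sum.neutral) blast
    then show ?thesis
      by blast
  next
    case True
    then have am: "?a \<le> m" and pa: "\<forall>k<?a. p k = k"
      by auto
    define w where "w k = comb n (\<lambda>l. image_coeffs ?a ?b \<alpha> l k) ((!) tgt)" for k
    have "inV n (w k)" for k
      unfolding w_def using inV_tgt_nth by (rule inV_comb)
    moreover have "(\<Sum>S\<in>ksub n m. M T S * minor m v ((!) (sl S))) = minor m w ((!) (sl T))"
      if "T \<in> ksub n m" for T
    proof -
      have "(\<Sum>S\<in>ksub n m. M T S * minor m v ((!) (sl S)))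
          = (\<Sum>f\<in>maps_into m n. (\<Prod>k<m. image_coeffs ?a ?b \<alpha> (f k) k) * minor m (\<lambda>k. tgt ! (f k)) ((!) (sl T)))"
        unfolding expansion[OF that]
      proof (rule sum.cong[OF refl])
        fix f
        assume f: "f \<in> maps_into m n"
        show "(\<Prod>k<m. \<alpha> (f k) k) * (if ?c f then minor m (\<lambda>k. tgt ! (f k)) ((!) (sl T)) else 0)
            = (\<Prod>k<m. image_coeffs ?a ?b \<alpha> (f k) k) * minor m (\<lambda>k. tgt ! (f k)) ((!) (sl T))"
        proof (cases "inj_on f {0..<m}")
          case True
          show ?thesis
            unfolding echelon_image_coeffs[OF e am pa f True, symmetric] by simp
        qed (simp add: minor_noninj)
      qed
      also have "\<dots> = minor m w ((!) (sl T))"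
        unfolding w_def minor_comb ..
      finally show ?thesis .
    qed
    moreover have "fspan m w = rel_image rel (fspan m v)"
      unfolding w_def v_def
      using fspan_image_subset_rel_image rel_image_subset_fspan_image echelon_initial_rows[OF e am pa]
      by (intro equalityI) (blast intro: am)+
    ultimately show ?thesis
      by blast
  qed
qed

lemma adapted_decomposable:
  assumes M: "\<forall>I\<in>ksub n m. \<forall>T\<in>ksub n m.
         (\<Sum>S\<in>ksub n m. M T S * wedge (subl src I) S)
         = (if {..<length fs} \<subseteq> I \<and> I \<subseteq> {..<length fs + length gs}
            then wedge (subl tgt I) T else 0)"
    and u: "\<And>k. k < m \<Longrightarrow> inV n (u k)"
  shows "(\<forall>T\<in>ksub n m. (\<Sum>S\<in>ksub n m. M T S * minor m u ((!) (sl S))) = 0) \<or>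
    (\<exists>w \<kappa>. (\<forall>k<m. inV n (w k)) \<and>
       (\<forall>T\<in>ksub n m. (\<Sum>S\<in>ksub n m. M T S * minor m u ((!) (sl S))) = \<kappa> * minor m w ((!) (sl T))) \<and>
       fspan m w = rel_image rel (fspan m u))"
proof -
  let ?sum = "\<lambda>v T. \<Sum>S\<in>ksub n m. M T S * minor m v ((!) (sl S))"
  consider "\<forall>r. minor m u r = 0"
    | \<alpha> p \<kappa> where "echelon m n \<alpha> p" "fspan m u = fspan m (\<lambda>k. comb n (\<lambda>l. \<alpha> l k) ((!) src))"
      "\<forall>r. minor m u r = \<kappa> * minor m (\<lambda>k. comb n (\<lambda>l. \<alpha> l k) ((!) src)) r"
    using echelon_reduction[of n src m u, OF source_basis u] by blast
  then show ?thesis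
  proof cases
    case 1
    then show ?thesis
      by simp
  next
    case (2 \<alpha> p \<kappa>)
    let ?v = "\<lambda>k. comb n (\<lambda>l. \<alpha> l k) ((!) src)"
    have sum_u: "?sum u T = \<kappa> * ?sum ?v T" for T
      using 2(3) by (simp add: sum_distrib_left mult.left_commute)
    from lamP_echelon_action[OF M 2(1)] show ?thesis
    proof
      assume "\<forall>T\<in>ksub n m. ?sum ?v T = 0"
      then show ?thesis
        using sum_u by simp
    next
      assume "\<exists>w. (\<forall>k<m. inV n (w k)) \<and> (\<forall>T\<in>ksub n m. ?sum ?v T = minor m w ((!) (sl T)))
          \<and> fspan m w = rel_image rel (fspan m ?v)"
      then obtain w where "\<forall>k<m. inV n (w k)" "\<forall>T\<in>ksub n m. ?sum ?v T = minor m w ((!) (sl T))"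
        "fspan m w = rel_image rel (fspan m ?v)"
        by blast
      then show ?thesis
        using sum_u 2(2) by (intro disjI2 exI[of _ w] exI[of _ \<kappa>]) simp
    qed
  qed
qed

end

lemma lamP_decomposable:
  assumes lp: "lamP n P m M" and u: "\<And>k. k < m \<Longrightarrow> inV n (u k)"
  shows "(\<forall>T\<in>ksub n m. (\<Sum>S\<in>ksub n m. M T S * minor m u ((!) (sl S))) = 0) \<or>
    (\<exists>w \<kappa>. (\<forall>k<m. inV n (w k)) \<and>
       (\<forall>T\<in>ksub n m. (\<Sum>S\<in>ksub n m. M T S * minor m u ((!) (sl S))) = \<kappa> * minor m w ((!) (sl T))) \<and>
       fspan m w = rel_image P (fspan m u))"
proof -
  obtain fs gs hs Fs Gs Hs where data: "length fs = length Fs \<and> length gs = length Gs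
      \<and> length hs = length Hs \<and> is_basis n (fs @ gs @ hs) \<and> is_basis n (Fs @ Gs @ Hs)
    \<and> P = pspan (map (\<lambda>F. (zv, F)) Fs @ zip gs Gs @ map (\<lambda>h. (h, zv)) hs)
    \<and> (\<forall>I\<in>ksub n m. \<forall>T\<in>ksub n m.
         (\<Sum>S\<in>ksub n m. M T S * wedge (subl (fs @ gs @ hs) I) S)
         = (if {..<length fs} \<subseteq> I \<and> I \<subseteq> {..<length fs + length gs}
            then wedge (subl (Fs @ Gs @ Hs) I) T else 0))"
    using lp unfolding lamP_def by (elim exE) (rule that, assumption)
  then interpret adapted_bases n fs gs hs Fs Gs Hs
    unfolding adapted_bases_def by blast
  have "P = rel"
    using data unfolding rel_def by blast
  then show ?thesis
    using adapted_decomposable[of m M u] data u by blast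
qed

section \<open>Bases adapted to a flag\<close>

text \<open>\<open>w 0, \<dots>, w (k - 1)\<close> is the beginning of a basis adapted to the subspaces
  \<open>fspan d (W d)\<close>, \<open>d \<in> D\<close>, which have dimension \<open>d\<close>.\<close>
definition adapted_prefix :: "nat \<Rightarrow> nat set \<Rightarrow> (nat \<Rightarrow> nat \<Rightarrow> cvec) \<Rightarrow> nat \<Rightarrow> (nat \<Rightarrow> cvec) \<Rightarrow> bool" where
  "adapted_prefix n D W k w \<longleftrightarrow> (\<forall>i<k. inV n (w i)) \<and> findep k w
     \<and> (\<forall>d\<in>D. d \<le> k \<longrightarrow> fspan d w = fspan d (W d))
     \<and> (\<forall>d\<in>D. k \<le> d \<longrightarrow> fspan k w \<subseteq> fspan d (W d))"

lemma adapted_prefix_extend: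
  assumes inv: "adapted_prefix n D W k w"
    and kK: "Suc k \<le> K" and ie: "findep K e" and eV: "\<And>i. i < K \<Longrightarrow> inV n (e i)"
    and sk: "fspan k w \<subseteq> fspan K e"
    and sd: "\<And>d. d \<in> D \<Longrightarrow> Suc k \<le> d \<Longrightarrow> fspan K e \<subseteq> fspan d (W d)"
  shows "\<exists>w'. adapted_prefix n D W (Suc k) w'"
proof -
  have wV: "\<forall>i<k. inV n (w i)" and iw: "findep k w"
    and eq: "\<forall>d\<in>D. d \<le> k \<longrightarrow> fspan d w = fspan d (W d)"
    using inv unfolding adapted_prefix_def by auto
  have "\<not> fspan K e \<subseteq> fspan k w"
  proof
    assume "fspan K e \<subseteq> fspan k w"
    then have "\<not> findep K e"
      using kK fspan_member by (intro not_findep_in_smaller_fspan[of K e k w]) auto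
    with ie show False
      by simp
  qed
  then obtain v where vT: "v \<in> fspan K e" and vn: "v \<notin> fspan k w"
    by auto
  define w' where "w' = w(k := v)"
  have "inV n v"
    using vT eV unfolding fspan_def by (auto intro: inV_comb)
  then have w'V: "\<forall>i<Suc k. inV n (w' i)"
    using wV unfolding w'_def by (auto simp: less_Suc_eq)
  have iw': "findep (Suc k) w'"
    unfolding w'_def by (rule findep_extend[OF iw vn])
  have sub: "fspan (Suc k) w' \<subseteq> fspan K e"
  proof (rule fspan_subset)
    fix i
    assume "i < Suc k"
    then show "w' i \<in> fspan K e"
      using sk fspan_member[of i k w] vT unfolding w'_def by (cases "i = k") auto
  qed
  have "fspan d w' = fspan d (W d)" if d: "d \<in> D" "d \<le> Suc k" for d
  proof (cases "d \<le> k")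
    case True
    have "fspan d w' = fspan d w"
      using True by (intro fspan_cong) (auto simp: w'_def)
    then show ?thesis
      using eq d True by simp
  next
    case False
    then have dk: "d = Suc k"
      using d by simp
    show ?thesis
      unfolding dk
    proof (rule fspan_eq_if_findep[OF iw'])
      fix i
      assume "i < Suc k"
      then show "w' i \<in> fspan (Suc k) (W (Suc k))"
        using fspan_member[of i "Suc k" w'] sub sd[OF d(1)] dk by auto
    qed
  qed
  then show ?thesis
    unfolding adapted_prefix_def using w'V iw' sub sd by (intro exI[of _ w']) blast
qed

definition std_basis :: "nat \<Rightarrow> cvec" where
  "std_basis i = (\<lambda>x. if x = i then 1 else 0)"

lemma comb_std_basis: "comb n c std_basis x = (if x < n then c x else 0)"
proof -
  have "(\<Sum>l<n. c l * std_basis l x) = (\<Sum>l<n. if l = x then c l else 0)"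
    by (rule sum.cong) (auto simp: std_basis_def)
  then show ?thesis
    unfolding comb_def by simp
qed

lemma findep_std_basis: "findep n std_basis"
  unfolding findep_def by (metis comb_std_basis)

lemma inV_std_basis: "inV n (std_basis i) \<longleftrightarrow> i < n"
  unfolding inV_def std_basis_def by auto

lemma fspan_std_basis: "inV n v \<Longrightarrow> v \<in> fspan n std_basis"
  unfolding fspan_def by (rule range_eqI[of _ _ v]) (auto simp: comb_std_basis inV_def)

lemma adapted_basis_exists:
  assumes fin: "finite D" and Dn: "\<forall>d\<in>D. d \<le> n"
    and WV: "\<forall>d\<in>D. (\<forall>k<d. inV n (W d k)) \<and> findep d (W d)"
    and nest: "\<forall>d\<in>D. \<forall>d'\<in>D. d < d' \<longrightarrow> fspan d (W d) \<subseteq> fspan d' (W d')"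
  shows "\<exists>w. adapted_prefix n D W n w"
proof -
  have "k \<le> n \<Longrightarrow> \<exists>w. adapted_prefix n D W k w" for k
  proof (induction k)
    case 0
    have "fspan 0 u = {\<lambda>x. 0}" for u
      unfolding fspan_def comb_def by auto
    then have "adapted_prefix n D W 0 (\<lambda>_. zv)"
      unfolding adapted_prefix_def findep_def using zero_in_fspan by auto
    then show ?case
      by blast
  next
    case (Suc k)
    then obtain w where inv: "adapted_prefix n D W k w"
      by auto
    define Dk where "Dk = {d\<in>D. Suc k \<le> d}"
    show ?case
    proof (cases "Dk = {}")
      case False
      \<comment> \<open>extend inside the smallest member of the flag not yet reached\<close>
      define ds where "ds = Min Dk"
      have finDk: "finite Dk"
        using fin unfolding Dk_def by simp
      have dsD: "ds \<in> Dk" and dsmin: "\<And>d. d \<in> Dk \<Longrightarrow> ds \<le> d"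
        unfolding ds_def using Min_in[OF finDk False] Min_le[OF finDk] by blast+
      show ?thesis
      proof (rule adapted_prefix_extend[OF inv, of ds "W ds"])
        show "Suc k \<le> ds" "findep ds (W ds)" "\<And>i. i < ds \<Longrightarrow> inV n (W ds i)"
          using WV dsD unfolding Dk_def by simp_all
        show "fspan k w \<subseteq> fspan ds (W ds)"
          using inv dsD unfolding adapted_prefix_def Dk_def by auto
        fix d
        assume d: "d \<in> D" "Suc k \<le> d"
        then have "ds \<le> d"
          using dsmin unfolding Dk_def by simp
        then show "fspan ds (W ds) \<subseteq> fspan d (W d)"
          using nest dsD d unfolding Dk_def by (cases "ds = d") auto
      qed
    next
      case True
      show ?thesis
      proof (rule adapted_prefix_extend[OF inv, of n std_basis])
        show "fspan k w \<subseteq> fspan n std_basis"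
          using inv by (intro fspan_subset fspan_std_basis) (auto simp: adapted_prefix_def)
      qed (use Suc True in \<open>auto simp: findep_std_basis inV_std_basis Dk_def\<close>)
    qed
  qed
  then show ?thesis
    by simp
qed

lemma cspan_zero: "(\<lambda>i. 0) \<in> cspan X"
  unfolding cspan_def by (rule CollectI, rule exI[of _ "{}"]) auto

lemma cspan_scale_generator: "v \<in> X \<Longrightarrow> (\<lambda>i. s * v i) \<in> cspan X"
  unfolding cspan_def by (rule CollectI, rule exI[of _ "{v}"], rule exI[of _ "\<lambda>_. s"]) auto

lemma cspan_scale: "x \<in> cspan X \<Longrightarrow> (\<lambda>i. s * x i) \<in> cspan X"
proof -
  assume "x \<in> cspan X"
  then obtain F c where F: "finite F" "F \<subseteq> X" "x = (\<lambda>i. \<Sum>v\<in>F. c v * v i)"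
    unfolding cspan_def by auto
  then show ?thesis
    unfolding cspan_def
    by (intro CollectI exI[of _ F] exI[of _ "\<lambda>v. s * c v"]) (auto simp: sum_distrib_left mult.assoc)
qed

lemma cspan_add: "x \<in> cspan X \<Longrightarrow> y \<in> cspan X \<Longrightarrow> (\<lambda>i. x i + y i) \<in> cspan X"
proof -
  assume "x \<in> cspan X" "y \<in> cspan X"
  then obtain F c G d where F: "finite F" "F \<subseteq> X" "x = (\<lambda>i. \<Sum>v\<in>F. c v * v i)"
    and G: "finite G" "G \<subseteq> X" "y = (\<lambda>i. \<Sum>v\<in>G. d v * v i)"
    unfolding cspan_def by auto
  define e where "e v = (if v \<in> F then c v else 0) + (if v \<in> G then d v else 0)" for v
  have "(\<lambda>i. x i + y i) = (\<lambda>i. \<Sum>v\<in>F \<union> G. e v * v i)"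
  proof (rule ext)
    fix i
    have "(\<Sum>v\<in>F \<union> G. (if v \<in> F then c v else 0) * v i) = (\<Sum>v\<in>F. c v * v i)"
      by (rule sum.mono_neutral_cong_right) (use F G in auto)
    moreover have "(\<Sum>v\<in>F \<union> G. (if v \<in> G then d v else 0) * v i) = (\<Sum>v\<in>G. d v * v i)"
      by (rule sum.mono_neutral_cong_right) (use F G in auto)
    ultimately show "x i + y i = (\<Sum>v\<in>F \<union> G. e v * v i)"
      unfolding e_def distrib_right sum.distrib F(3) G(3) by simp
  qed
  then show ?thesis
    unfolding cspan_def using F G by blast
qed

lemma cspan_sum:
  assumes "finite F" "\<And>v. v \<in> F \<Longrightarrow> h v \<in> cspan Y"
  shows "(\<lambda>i. \<Sum>v\<in>F. c v * h v i) \<in> cspan Y"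
  using assms
proof (induction F rule: finite_induct)
  case empty
  then show ?case
    using cspan_zero by simp
next
  case (insert v F)
  then have "(\<lambda>i. c v * h v i + (\<Sum>v\<in>F. c v * h v i)) \<in> cspan Y"
    by (intro cspan_add cspan_scale) auto
  then show ?case
    using insert by simp
qed

section \<open>Tensor products\<close>

lemma tb_Nil: "tb n [] = {[]}"
  unfolding tb_def by auto

lemma tb_Cons: "tb n (d # ds) = (\<lambda>(S, Ss). S # Ss) ` (ksub n d \<times> tb n ds)"
proof
  show "tb n (d # ds) \<subseteq> (\<lambda>(S, Ss). S # Ss) ` (ksub n d \<times> tb n ds)"
  proof
    fix Ss
    assume "Ss \<in> tb n (d # ds)"
    then show "Ss \<in> (\<lambda>(S, Ss). S # Ss) ` (ksub n d \<times> tb n ds)"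
      unfolding tb_def by (cases Ss) (auto intro!: image_eqI[of _ _ "(hd Ss, tl Ss)"])
  qed
  show "(\<lambda>(S, Ss). S # Ss) ` (ksub n d \<times> tb n ds) \<subseteq> tb n (d # ds)"
    unfolding tb_def by (auto simp: nth_Cons split: nat.splits)
qed

lemma finite_tb: "finite (tb n ds)"
  by (induction ds) (auto simp: tb_Nil tb_Cons finite_ksub)

lemma sum_tb_prod:
  fixes H :: "nat \<Rightarrow> nat set \<Rightarrow> complex"
  shows "(\<Sum>Ss\<in>tb n ds. \<Prod>k<length ds. H k (Ss ! k)) = (\<Prod>k<length ds. \<Sum>S\<in>ksub n (ds ! k). H k S)"
proof (induction ds arbitrary: H)
  case Nil
  then show ?case
    by (simp add: tb_Nil)
next
  case (Cons d ds)
  have inj: "inj_on (\<lambda>(S, Ss). S # Ss) (ksub n d \<times> tb n ds)"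
    by (auto simp: inj_on_def)
  have "(\<Sum>Ss\<in>tb n (d # ds). \<Prod>k<length (d # ds). H k (Ss ! k))
      = (\<Sum>p\<in>ksub n d \<times> tb n ds. \<Prod>k<Suc (length ds). H k ((fst p # snd p) ! k))"
    unfolding tb_Cons by (subst sum.reindex[OF inj]) (auto intro!: sum.cong simp: case_prod_beta)
  also have "\<dots> = (\<Sum>p\<in>ksub n d \<times> tb n ds. H 0 (fst p) * (\<Prod>k<length ds. H (Suc k) (snd p ! k)))"
    by (rule sum.cong[OF refl], subst prod.lessThan_Suc_shift) simp
  also have "\<dots> = (\<Sum>S\<in>ksub n d. \<Sum>Ss\<in>tb n ds. H 0 S * (\<Prod>k<length ds. H (Suc k) (Ss ! k)))"
    unfolding sum.cartesian_product by (simp add: case_prod_beta)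
  also have "\<dots> = (\<Sum>S\<in>ksub n d. H 0 S) * (\<Sum>Ss\<in>tb n ds. \<Prod>k<length ds. H (Suc k) (Ss ! k))"
    by (simp add: sum_product)
  also have "\<dots> = (\<Prod>k<length (d # ds). \<Sum>S\<in>ksub n ((d # ds) ! k). H k S)"
    unfolding Cons.IH[of "\<lambda>k. H (Suc k)"]
    by (simp only: length_Cons prod.lessThan_Suc_shift nth_Cons_0 nth_Cons_Suc)
  finally show ?case .
qed

lemma rnu_sum:
  "finite F \<Longrightarrow> rnu n ds A (\<lambda>i. \<Sum>v\<in>F. c v * v i) = (\<lambda>Ts. \<Sum>v\<in>F. c v * rnu n ds A v Ts)"
  unfolding rnu_def by (rule ext) (auto simp: sum_distrib_left mult.left_commute intro: sum.swap)

lemma rnu_Xi: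
  assumes "\<forall>d\<in>set ds. d \<le> n"
  shows "rnu n ds B (Xi ds)
    = (\<lambda>Ts. if Ts \<in> tb n ds then (\<Prod>k<length ds. B (ds ! k) (Ts ! k) {..<ds ! k}) else 0)"
proof (rule ext)
  fix Ts
  let ?S0 = "map (\<lambda>d. {..<d}) ds"
  have S0: "?S0 \<in> tb n ds"
    using assms unfolding tb_def ksub_def by auto
  have "(\<Sum>Ss\<in>tb n ds. (\<Prod>k<length ds. B (ds ! k) (Ts ! k) (Ss ! k)) * Xi ds Ss)
      = (\<Sum>Ss\<in>tb n ds. if Ss = ?S0 then (\<Prod>k<length ds. B (ds ! k) (Ts ! k) (Ss ! k)) else 0)"
    by (rule sum.cong) (auto simp: Xi_def)
  also have "\<dots> = (\<Prod>k<length ds. B (ds ! k) (Ts ! k) {..<ds ! k})"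
    using S0 finite_tb by (simp add: sum.delta')
  finally show "rnu n ds B (Xi ds) Ts
      = (if Ts \<in> tb n ds then (\<Prod>k<length ds. B (ds ! k) (Ts ! k) {..<ds ! k}) else 0)"
    unfolding rnu_def by simp
qed

lemma rnu_product_tensor:
  "rnu n ds A (\<lambda>Ts. if Ts \<in> tb n ds then (\<Prod>k<length ds. G k (Ts ! k)) else 0)
   = (\<lambda>Ts. if Ts \<in> tb n ds
       then (\<Prod>k<length ds. \<Sum>S\<in>ksub n (ds ! k). A (ds ! k) (Ts ! k) S * G k S) else 0)"
proof (rule ext)
  fix Ts
  have "(\<Sum>Ss\<in>tb n ds. (\<Prod>k<length ds. A (ds ! k) (Ts ! k) (Ss ! k))
        * (if Ss \<in> tb n ds then (\<Prod>k<length ds. G k (Ss ! k)) else 0))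
     = (\<Sum>Ss\<in>tb n ds. \<Prod>k<length ds. A (ds ! k) (Ts ! k) (Ss ! k) * G k (Ss ! k))"
    by (rule sum.cong) (auto simp: prod.distrib)
  also have "\<dots> = (\<Prod>k<length ds. \<Sum>S\<in>ksub n (ds ! k). A (ds ! k) (Ts ! k) S * G k S)"
    by (rule sum_tb_prod)
  finally show "rnu n ds A (\<lambda>Ts. if Ts \<in> tb n ds then (\<Prod>k<length ds. G k (Ts ! k)) else 0) Ts
      = (if Ts \<in> tb n ds
         then (\<Prod>k<length ds. \<Sum>S\<in>ksub n (ds ! k). A (ds ! k) (Ts ! k) S * G k S) else 0)"
    unfolding rnu_def by simp
qed

lemma degs_bounds: "d \<in> set (degs n nu) \<Longrightarrow> 1 \<le> d \<and> d \<le> n"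
  unfolding degs_def by (auto split: if_splits)

lemma lam_cha_columns:
  assumes "S \<in> ksub n d"
  shows "lam_cha g d S {..<d} = minor d (\<lambda>k x. if x < n then g x k else 0) ((!) (sl S))"
  unfolding lam_cha_minor using sorted_ksub_nth_less[OF assms] by (intro minor_cong_rows) auto

lemma product_tensor_in_Hnu:
  assumes g: "g \<in> GLn n"
    and F: "\<And>k T. k < length (degs n nu) \<Longrightarrow> T \<in> ksub n (degs n nu ! k)
      \<Longrightarrow> F k T = C k * lam_cha g (degs n nu ! k) T {..<degs n nu ! k}"
  shows "(\<lambda>Ts. if Ts \<in> tb n (degs n nu) then \<Prod>k<length (degs n nu). F k (Ts ! k) else 0) \<in> Hnu n nu"
proof -
  let ?ds = "degs n nu"
  have "\<forall>d\<in>set ?ds. d \<le> n"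
    using degs_bounds by blast
  note generator = rnu_Xi[OF this, of "lam_cha g"]
  have "(\<Prod>k<length ?ds. F k (Ts ! k))
      = (\<Prod>k<length ?ds. C k) * (\<Prod>k<length ?ds. lam_cha g (?ds ! k) (Ts ! k) {..<?ds ! k})"
    if "Ts \<in> tb n ?ds" for Ts
    using that F unfolding tb_def prod.distrib[symmetric] by (intro prod.cong) auto
  then have "(\<lambda>Ts. if Ts \<in> tb n ?ds then \<Prod>k<length ?ds. F k (Ts ! k) else 0)
      = (\<lambda>Ts. (\<Prod>k<length ?ds. C k) * rnu n ?ds (lam_cha g) (Xi ?ds) Ts)"
    unfolding generator by auto
  moreover have "rnu n ?ds (lam_cha g) (Xi ?ds) \<in> {rnu n ?ds (lam_cha g) (Xi ?ds) | g. g \<in> GLn n}"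
    using g by blast
  ultimately show ?thesis
    unfolding Hnu_def by (simp add: cspan_scale_generator)
qed

section \<open>Hinges\<close>

lemma Indef_subset_Im: "Indef P \<subseteq> Im P"
  unfolding Indef_def Im_def by force

lemma rel_image_mono: "U \<subseteq> U' \<Longrightarrow> rel_image P U \<subseteq> rel_image P U'"
  unfolding rel_image_def by auto

lemma rel_image_subset_Im: "rel_image P U \<subseteq> Im P"
  unfolding rel_image_def Im_def by force

lemma Indef_subset_rel_image: "zv \<in> U \<Longrightarrow> Indef P \<subseteq> rel_image P U"
  unfolding rel_image_def Indef_def by auto

lemma hinge_Im_subset_Indef:
  assumes h: "hinge n Ps" and ij: "i < j" "j < length Ps"
  shows "Im (Ps ! i) \<subseteq> Indef (Ps ! j)"
  using ij
proof (induction j)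
  case (Suc j)
  have e: "Im (Ps ! j) = Indef (Ps ! Suc j)"
    using h Suc.prems unfolding hinge_def by blast
  show ?case
  proof (cases "i = j")
    case False
    then have "Im (Ps ! i) \<subseteq> Indef (Ps ! j)"
      using Suc by simp
    also have "\<dots> \<subseteq> Im (Ps ! j)"
      by (rule Indef_subset_Im)
    finally show ?thesis
      using e by simp
  qed (use e in simp)
qed simp

lemma hinge_tuple_components:
  assumes "hinge_tuple n A"
  obtains Ps J M c where "hinge n Ps" "\<And>d. d \<le> n \<Longrightarrow> J d < length Ps"
    "\<And>d. d \<le> n \<Longrightarrow> lamP n (Ps ! J d) d (M d)"
    "\<And>d T S. d \<le> n \<Longrightarrow> T \<in> ksub n d \<Longrightarrow> S \<in> ksub n d \<Longrightarrow> A d T S = c d * M d T S"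
proof -
  obtain Ps where hinge: "hinge n Ps" and H: "\<forall>d\<le>n. \<exists>j<length Ps. \<exists>M. lamP n (Ps ! j) d M
      \<and> (\<exists>c. \<forall>T\<in>ksub n d. \<forall>S\<in>ksub n d. A d T S = c * M T S)"
    using assms unfolding hinge_tuple_def by blast
  obtain J where J: "\<forall>d\<le>n. J d < length Ps \<and> (\<exists>M. lamP n (Ps ! J d) d M
      \<and> (\<exists>c. \<forall>T\<in>ksub n d. \<forall>S\<in>ksub n d. A d T S = c * M T S))"
    using H by metis
  obtain M where M: "\<forall>d\<le>n. lamP n (Ps ! J d) d (M d)
      \<and> (\<exists>c. \<forall>T\<in>ksub n d. \<forall>S\<in>ksub n d. A d T S = c * M d T S)"
    using J by metis
  obtain c where "\<forall>d\<le>n. \<forall>T\<in>ksub n d. \<forall>S\<in>ksub n d. A d T S = c d * M d T S"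
    using M by metis
  then show ?thesis
    using that[of Ps J M c] hinge J M by blast
qed

text \<open>This is where the hinge axioms enter: the images of \<open>span u\<close> under the members of a hinge
  are nested, since \<open>Im P\<^sub>i \<subseteq> Indef P\<^sub>j\<close> for \<open>i < j\<close>.\<close>
lemma hinge_images_nested:
  assumes hinge: "hinge n Ps" and J: "\<And>d. d \<in> D \<Longrightarrow> J d < length Ps"
    and W: "\<And>d. d \<in> D \<Longrightarrow> fspan d (W d) = rel_image (Ps ! J d) (fspan d u)"
    and ind: "\<And>d. d \<in> D \<Longrightarrow> findep d (W d)"
    and d: "d \<in> D" "d' \<in> D" "d < d'"
  shows "fspan d (W d) \<subseteq> fspan d' (W d')"
proof -
  have later: "fspan e (W e) \<subseteq> fspan e' (W e')" if "e \<in> D" "e' \<in> D" "J e < J e'" for e e'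
  proof -
    have "rel_image (Ps ! J e) (fspan e u) \<subseteq> Im (Ps ! J e)"
      by (rule rel_image_subset_Im)
    also have "\<dots> \<subseteq> Indef (Ps ! J e')"
      using that J by (intro hinge_Im_subset_Indef[OF hinge]) auto
    also have "\<dots> \<subseteq> rel_image (Ps ! J e') (fspan e' u)"
      by (rule Indef_subset_rel_image[OF zv_in_fspan])
    finally show ?thesis
      using W that by simp
  qed
  consider "J d = J d'" | "J d < J d'" | "J d' < J d"
    by linarith
  then show ?thesis
  proof cases
    case 1
    have "rel_image (Ps ! J d) (fspan d u) \<subseteq> rel_image (Ps ! J d') (fspan d' u)"
      unfolding 1 using d by (intro rel_image_mono fspan_mono) simp
    then show ?thesis
      using W d by simp
  next
    case 2
    then show ?thesis
      using later d by blast
  next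
    case 3
    then have "fspan d' (W d') \<subseteq> fspan d (W d)"
      using later d by blast
    then have "\<not> findep d' (W d')"
      using d fspan_member by (intro not_findep_in_smaller_fspan[of d' "W d'" d "W d"]) blast+
    with ind d show ?thesis
      by blast
  qed
qed

lemma hinge_common_basis:
  assumes hinge: "hinge n Ps" and fin: "finite D" and Dn: "\<And>d. d \<in> D \<Longrightarrow> d \<le> n"
    and J: "\<And>d. d \<in> D \<Longrightarrow> J d < length Ps"
    and WV: "\<And>d k. d \<in> D \<Longrightarrow> k < d \<Longrightarrow> inV n (W d k)"
    and W: "\<And>d. d \<in> D \<Longrightarrow> fspan d (W d) = rel_image (Ps ! J d) (fspan d u)"
    and ind: "\<And>d. d \<in> D \<Longrightarrow> findep d (W d)"
  obtains w \<mu> where "\<And>i. i < n \<Longrightarrow> inV n (w i)" "findep n w"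
    "\<And>d r. d \<in> D \<Longrightarrow> minor d (W d) r = \<mu> d * minor d w r"
proof -
  have "\<forall>d\<in>D. \<forall>d'\<in>D. d < d' \<longrightarrow> fspan d (W d) \<subseteq> fspan d' (W d')"
    using hinge_images_nested[OF hinge J W ind] by blast
  then obtain w where "adapted_prefix n D W n w"
    using adapted_basis_exists[OF fin] Dn WV ind by blast
  then have wV: "\<And>i. i < n \<Longrightarrow> inV n (w i)" and iw: "findep n w"
    and sw: "\<And>d. d \<in> D \<Longrightarrow> fspan d (W d) = fspan d w"
    using Dn unfolding adapted_prefix_def by auto
  have "\<forall>d. \<exists>\<mu>. d \<in> D \<longrightarrow> (\<forall>r. minor d (W d) r = \<mu> * minor d w r)"
    using minor_proportional_if_fspan_eq[OF sw] by metis
  then obtain \<mu> where "\<And>d r. d \<in> D \<Longrightarrow> minor d (W d) r = \<mu> d * minor d w r"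
    by metis
  with wV iw show ?thesis
    using that by blast
qed

lemma lamP_multiple_decomposable:
  assumes lp: "lamP n P d M" and u: "\<forall>k. inV n (u k)"
    and BM: "\<forall>T\<in>ksub n d. \<forall>S\<in>ksub n d. B T S = c * M T S"
    and nz: "\<exists>T\<in>ksub n d. (\<Sum>S\<in>ksub n d. B T S * minor d u ((!) (sl S))) \<noteq> 0"
  shows "\<exists>W \<kappa>. (\<forall>k<d. inV n (W k)) \<and> findep d W
    \<and> (\<forall>T\<in>ksub n d. (\<Sum>S\<in>ksub n d. B T S * minor d u ((!) (sl S))) = \<kappa> * minor d W ((!) (sl T)))
    \<and> fspan d W = rel_image P (fspan d u)"
proof -
  let ?sum = "\<lambda>M T. \<Sum>S\<in>ksub n d. M T S * minor d u ((!) (sl S))"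
  have B: "?sum B T = c * ?sum M T" if "T \<in> ksub n d" for T
    using BM that by (simp add: sum_distrib_left mult.assoc)
  have "(\<forall>T\<in>ksub n d. ?sum M T = 0) \<or> (\<exists>W \<kappa>. (\<forall>k<d. inV n (W k)) \<and>
      (\<forall>T\<in>ksub n d. ?sum M T = \<kappa> * minor d W ((!) (sl T))) \<and> fspan d W = rel_image P (fspan d u))"
    using lamP_decomposable[OF lp, of u] u by blast
  moreover have "\<not> (\<forall>T\<in>ksub n d. ?sum M T = 0)"
    using nz B by auto
  ultimately obtain W \<kappa> where WV: "\<forall>k<d. inV n (W k)" and WP: "fspan d W = rel_image P (fspan d u)"
    and W\<kappa>: "\<forall>T\<in>ksub n d. ?sum M T = \<kappa> * minor d W ((!) (sl T))"
    by blast
  then have sum_B: "\<forall>T\<in>ksub n d. ?sum B T = (c * \<kappa>) * minor d W ((!) (sl T))"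
    using B by simp
  obtain T where "T \<in> ksub n d" "?sum B T \<noteq> 0"
    using nz by blast
  then have "findep d W"
    using sum_B by (intro findep_if_minor_nonzero[of d W "(!) (sl T)"]) auto
  then show ?thesis
    using WV WP sum_B by blast
qed

lemma hinge_tuple_common_basis:
  assumes ht: "hinge_tuple n A" and fin: "finite D" and Dn: "\<forall>d\<in>D. d \<le> n"
    and uV: "\<forall>k. inV n (u k)"
    and nz: "\<forall>d\<in>D. \<exists>T\<in>ksub n d. (\<Sum>S\<in>ksub n d. A d T S * minor d u ((!) (sl S))) \<noteq> 0"
  shows "\<exists>w \<mu>. (\<forall>i<n. inV n (w i)) \<and> findep n w \<and> (\<forall>d\<in>D. \<forall>T\<in>ksub n d.
    (\<Sum>S\<in>ksub n d. A d T S * minor d u ((!) (sl S))) = \<mu> d * minor d w ((!) (sl T)))"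
proof -
  let ?sum = "\<lambda>d T. \<Sum>S\<in>ksub n d. A d T S * minor d u ((!) (sl S))"
  obtain Ps J M c where hinge: "hinge n Ps" and J: "\<And>d. d \<le> n \<Longrightarrow> J d < length Ps"
    and lp: "\<And>d. d \<le> n \<Longrightarrow> lamP n (Ps ! J d) d (M d)"
    and AM: "\<And>d T S. d \<le> n \<Longrightarrow> T \<in> ksub n d \<Longrightarrow> S \<in> ksub n d \<Longrightarrow> A d T S = c d * M d T S"
    using hinge_tuple_components[OF ht] by blast
  have "\<forall>d\<in>D. \<exists>W \<kappa>. (\<forall>k<d. inV n (W k)) \<and> findep d W
      \<and> (\<forall>T\<in>ksub n d. ?sum d T = \<kappa> * minor d W ((!) (sl T)))
      \<and> fspan d W = rel_image (Ps ! J d) (fspan d u)"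
  proof
    fix d
    assume d: "d \<in> D"
    have dn: "d \<le> n"
      using Dn d by simp
    have "\<forall>T\<in>ksub n d. \<forall>S\<in>ksub n d. A d T S = c d * M d T S"
      using AM[OF dn] by blast
    moreover have "\<exists>T\<in>ksub n d. ?sum d T \<noteq> 0"
      using nz d by blast
    ultimately show "\<exists>W \<kappa>. (\<forall>k<d. inV n (W k)) \<and> findep d W
      \<and> (\<forall>T\<in>ksub n d. ?sum d T = \<kappa> * minor d W ((!) (sl T)))
      \<and> fspan d W = rel_image (Ps ! J d) (fspan d u)"
      by (rule lamP_multiple_decomposable[OF lp[OF dn] uV])
  qed
  from bchoice[OF this] obtain W where "\<forall>d\<in>D. \<exists>\<kappa>. (\<forall>k<d. inV n (W d k)) \<and> findep d (W d)
      \<and> (\<forall>T\<in>ksub n d. ?sum d T = \<kappa> * minor d (W d) ((!) (sl T)))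
      \<and> fspan d (W d) = rel_image (Ps ! J d) (fspan d u)"
    by (elim exE)
  from bchoice[OF this] obtain \<kappa> where W: "\<forall>d\<in>D. (\<forall>k<d. inV n (W d k)) \<and> findep d (W d)
      \<and> (\<forall>T\<in>ksub n d. ?sum d T = \<kappa> d * minor d (W d) ((!) (sl T)))
      \<and> fspan d (W d) = rel_image (Ps ! J d) (fspan d u)"
    by (elim exE)
  have WV: "\<And>d k. d \<in> D \<Longrightarrow> k < d \<Longrightarrow> inV n (W d k)"
    and indep: "\<And>d. d \<in> D \<Longrightarrow> findep d (W d)"
    and WP: "\<And>d. d \<in> D \<Longrightarrow> fspan d (W d) = rel_image (Ps ! J d) (fspan d u)"
    using W by blast+
  have Dle: "\<And>d. d \<in> D \<Longrightarrow> d \<le> n" and JD: "\<And>d. d \<in> D \<Longrightarrow> J d < length Ps"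
    using Dn J by auto
  obtain w \<mu> where wV: "\<And>i. i < n \<Longrightarrow> inV n (w i)" and iw: "findep n w"
    and W\<mu>: "\<And>d r. d \<in> D \<Longrightarrow> minor d (W d) r = \<mu> d * minor d w r"
    using hinge_common_basis[OF hinge fin Dle JD WV WP indep] by blast
  have sum: "?sum d T = (\<kappa> d * \<mu> d) * minor d w ((!) (sl T))" if "d \<in> D" "T \<in> ksub n d" for d T
  proof -
    have "?sum d T = \<kappa> d * minor d (W d) ((!) (sl T))"
      using W that by blast
    then show ?thesis
      using W\<mu>[OF that(1)] by simp
  qed
  show ?thesis
    by (intro exI[of _ w] exI[of _ "\<lambda>d. \<kappa> d * \<mu> d"]) (use wV iw sum in blast)
qed

lemma rnu_generator:
  assumes "\<forall>d\<in>set ds. d \<le> n"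
  shows "rnu n ds A (rnu n ds (lam_cha g) (Xi ds)) = (\<lambda>Ts. if Ts \<in> tb n ds
      then (\<Prod>k<length ds. \<Sum>S\<in>ksub n (ds ! k).
              A (ds ! k) (Ts ! k) S * minor (ds ! k) (\<lambda>k x. if x < n then g x k else 0) ((!) (sl S)))
      else 0)"
proof -
  have "rnu n ds A (rnu n ds (lam_cha g) (Xi ds)) = (\<lambda>Ts. if Ts \<in> tb n ds
      then (\<Prod>k<length ds. \<Sum>S\<in>ksub n (ds ! k). A (ds ! k) (Ts ! k) S * lam_cha g (ds ! k) S {..<ds ! k})
      else 0)"
    unfolding rnu_Xi[OF assms] by (rule rnu_product_tensor)
  then show ?thesis
    by (auto intro!: prod.cong sum.cong simp: lam_cha_columns)
qed

lemma hinge_tuple_maps_generator: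
  assumes ht: "hinge_tuple n A" and g: "g \<in> GLn n"
  shows "rnu n (degs n nu) A (rnu n (degs n nu) (lam_cha g) (Xi (degs n nu))) \<in> Hnu n nu"
proof -
  define ds where "ds = degs n nu"
  have Dn: "\<forall>d\<in>set ds. d \<le> n"
    using degs_bounds unfolding ds_def by auto
  define u where "u = (\<lambda>k x. if x < n then g x k else (0::complex))"
  have uV: "\<forall>k. inV n (u k)"
    unfolding u_def inV_def by simp
  define Fac where "Fac d T = (\<Sum>S\<in>ksub n d. A d T S * minor d u ((!) (sl S)))" for d T
  have tensor: "rnu n ds A (rnu n ds (lam_cha g) (Xi ds)) =
     (\<lambda>Ts. if Ts \<in> tb n ds then (\<Prod>k<length ds. Fac (ds ! k) (Ts ! k)) else 0)"
    unfolding rnu_generator[OF Dn] Fac_def u_def ..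
  show ?thesis
  proof (cases "\<forall>d\<in>set ds. \<exists>T\<in>ksub n d. Fac d T \<noteq> 0")
    case False
    then obtain k0 where k0: "k0 < length ds" "\<forall>T\<in>ksub n (ds ! k0). Fac (ds ! k0) T = 0"
      by (metis in_set_conv_nth)
    have "(\<Prod>k<length ds. Fac (ds ! k) (Ts ! k)) = 0" if "Ts \<in> tb n ds" for Ts
      using that k0 unfolding tb_def by (auto intro!: prod_zero)
    then have "rnu n ds A (rnu n ds (lam_cha g) (Xi ds)) = (\<lambda>Ts. 0)"
      unfolding tensor by auto
    then show ?thesis
      unfolding ds_def Hnu_def using cspan_zero by metis
  next
    case True
    obtain w \<mu> where wV: "\<And>i. i < n \<Longrightarrow> inV n (w i)" and iw: "findep n w"
      and Fac\<mu>: "\<And>d T. d \<in> set ds \<Longrightarrow> T \<in> ksub n d \<Longrightarrow> Fac d T = \<mu> d * minor d w ((!) (sl T))"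
      using hinge_tuple_common_basis[OF ht finite_set Dn uV True[unfolded Fac_def]] unfolding Fac_def by blast
    define g' where "g' i k = w k i" for i k
    have "g' \<in> GLn n"
      unfolding GLn_def g'_def using det_nonzero_if_findep[OF wV iw] by simp
    moreover have "Fac (ds ! k) T = \<mu> (ds ! k) * lam_cha g' (ds ! k) T {..<ds ! k}"
      if "k < length ds" "T \<in> ksub n (ds ! k)" for k T
      using that Fac\<mu> unfolding lam_cha_minor g'_def by simp
    ultimately have "(\<lambda>Ts. if Ts \<in> tb n ds then \<Prod>k<length ds. Fac (ds ! k) (Ts ! k) else 0) \<in> Hnu n nu"
      unfolding ds_def by (rule product_tensor_in_Hnu)
    then show ?thesis
      using tensor unfolding ds_def by simp
  qed
qed

theorem lemma2p13:
  fixes n :: nat and nu :: "nat \<Rightarrow> nat"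
  assumes signature: "\<forall>j. 1 \<le> j \<and> j < n \<longrightarrow> nu (Suc j) \<le> nu j"
  shows "\<forall>A x. hinge_tuple n A \<and> x \<in> Hnu n nu \<longrightarrow> rnu n (degs n nu) A x \<in> Hnu n nu"
proof (intro allI impI)
  fix A x
  assume h: "hinge_tuple n A \<and> x \<in> Hnu n nu"
  let ?ds = "degs n nu"
  let ?X = "{rnu n ?ds (lam_cha g) (Xi ?ds) | g. g \<in> GLn n}"
  obtain F c where F: "finite F" "F \<subseteq> ?X" "x = (\<lambda>i. \<Sum>v\<in>F. c v * v i)"
    using h unfolding Hnu_def cspan_def by auto
  have "rnu n ?ds A x = (\<lambda>Ts. \<Sum>v\<in>F. c v * rnu n ?ds A v Ts)"
    unfolding F(3) by (rule rnu_sum[OF F(1)])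
  also have "\<dots> \<in> Hnu n nu"
    unfolding Hnu_def
  proof (rule cspan_sum[OF F(1)])
    fix v
    assume "v \<in> F"
    then obtain g where "g \<in> GLn n" "v = rnu n ?ds (lam_cha g) (Xi ?ds)"
      using F(2) by auto
    then show "rnu n ?ds A v \<in> cspan ?X"
      using hinge_tuple_maps_generator[of n A g nu] h unfolding Hnu_def by simp
  qed
  finally show "rnu n ?ds A x \<in> Hnu n nu" .
qed

end
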